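(* Let $n\ge3$. The bipyramid $BP_n$ admits a $z$-orientation for which every face is of type I, every zigzag is homogeneous, the edges of type II are exactly the base edges $i(i+1)$ (forming a directed cycle), and the vertices of type I are exactly $a$ and $b$. Moreover: if $n$ is odd, any two consecutive base edges form a special pair, and any two special pairs with no common edge are concordant; if $n=2k$ with $k$ odd, for consecutive base edges $c,c'$ the edge $c$ occurs twice in one of the two zigzags of this $z$-orientation and $c'$ occurs twice in the other; if $n=2k$ with $k$ even, for consecutive base edges $c,c'$ the edge $c$ occurs once in each of two of the four zigzags and $c'$ occurs once in each of the other two.
   Context: The $n$-gonal bipyramid $BP_n$ ($n\ge3$) is the triangulation of the sphere with vertices $1,\dots,n,a,b$, edges $i(i+1)$ (indices mod $n$, the base), $ai$ and $bi$, and faces $\{a,i,i+1\}$, $\{b,i,i+1\}$. A zigzag is a sequence of edges $(e_i)$ such that $e_i,e_{i+1}$ are distinct edges of a common face, the face containing $e_i,e_{i+1}$ differs from that containing $e_{i+1},e_{i+2}$, and $e_i,e_{i+2}$ have no common vertex; it is a cyclic sequence passing through its edges in definite directions, and its reversal is a zigzag. A $z$-orientation is a set of zigzags containing exactly one of $Z,Z^{-1}$ for each zigzag $Z$. Each edge is passed twice in total by the zigzags of a $z$-orientation; it is of type I if the two passages have opposite directions, of type II (directed accordingly) otherwise. A vertex is of type I if all its edges are of type I. A face is of type I if it contains exactly two edges of type I. When all faces are of type I, a zigzag is homogeneous if it is a cyclic sequence $e_1,e_1',e_1'',\dots,e_m,e_m',e_m''$ with the $e_i$ of type II and the $e_i',e_i''$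 of type I. In a $z$-knotted triangulation (exactly one zigzag up to reversal) with such a $z$-orientation, a special pair is a pair of distinct type II edges $c_1,c_2$ with a common vertex such that the zigzag is a cyclic sequence $c_1,\dots,c_2,\dots,c_1,\dots,c_2,\dots$; special pairs $c_1,c_2$ and $t_1,t_2$ are concordant if $c_i\ne t_j$ for all $i,j$ and the zigzag is a cyclic sequence of the form $c_1,\dots,t_1,\dots,c_2,\dots,t_2,\dots,c_1,\dots,t_1,\dots,c_2,\dots,t_2,\dots$. *)

theory Defs
  imports Main
begin

text \<open>A triangulation is represented by its set of faces F (each face a 3-element
vertex set). Edges are the 2-element subsets of faces.\<close>

definition tri_edges :: "'v set set \<Rightarrow> 'v set set" where
  "tri_edges F = {e. card e = 2 \<and> (\<exists>f\<in>F. e \<subseteq> f)}"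

definition tri_vertices :: "'v set set \<Rightarrow> 'v set" where
  "tri_vertices F = \<Union>F"

text \<open>A zigzag is a cyclic sequence of edges; we represent a cyclic sequence by a
list (indices taken modulo its length) which is primitive (not a proper power), and the
zigzag itself by the set of all rotations of such a list.\<close>

definition is_zz_list :: "'v set set \<Rightarrow> 'v set list \<Rightarrow> bool" where
  "is_zz_list F es \<longleftrightarrow> es \<noteq> [] \<and>
     (\<forall>i<length es.
        let m = length es; e0 = es ! i; e1 = es ! ((i+1) mod m); e2 = es ! ((i+2) mod m)
        in e0 \<in> tri_edges F \<and> e1 \<in> tri_edges F \<and> e0 \<noteq> e1 \<and>
           (\<exists>f\<in>F. e0 \<union> e1 \<subseteq> f) \<and>
           e0 \<union> e1 \<noteq> e1 \<union> e2 \<and>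
           e0 \<inter> e2 = {}) \<and>
     (\<forall>d. 0 < d \<and> d < length es \<longrightarrow> rotate d es \<noteq> es)"

definition zz_class :: "'a list \<Rightarrow> 'a list set" where
  "zz_class es = {rotate k es | k. True}"

definition zigzags :: "'v set set \<Rightarrow> 'v set list set set" where
  "zigzags F = {zz_class es | es. is_zz_list F es}"

definition zz_rev :: "'a list set \<Rightarrow> 'a list set" where
  "zz_rev Z = rev ` Z"

definition z_orientation :: "'v set set \<Rightarrow> 'v set list set set \<Rightarrow> bool" where
  "z_orientation F ZO \<longleftrightarrow> ZO \<subseteq> zigzags F \<and>
     (\<forall>Z\<in>zigzags F. (Z \<in> ZO \<or> zz_rev Z \<in> ZO) \<and>
                      (Z \<noteq> zz_rev Z \<longrightarrow> \<not> (Z \<in> ZO \<and> zz_rev Z \<in> ZO)))"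

definition zz_rep :: "'a list set \<Rightarrow> 'a list" where
  "zz_rep Z = (SOME es. es \<in> Z)"

text \<open>Number of passages of the edge {u,v} in direction u to v along a list: the i-th edge
is passed towards its vertex shared with the next edge.\<close>
definition passes_list :: "'v set list \<Rightarrow> 'v \<Rightarrow> 'v \<Rightarrow> nat" where
  "passes_list es u v = card {i. i < length es \<and> es ! i = {u, v} \<and>
      v \<in> es ! ((i+1) mod length es) \<and> u \<notin> es ! ((i+1) mod length es)}"

definition passes :: "'v set list set set \<Rightarrow> 'v \<Rightarrow> 'v \<Rightarrow> nat" where
  "passes ZO u v = (\<Sum>Z\<in>ZO. passes_list (zz_rep Z) u v)"

definition zz_occ :: "'a list set \<Rightarrow> 'a \<Rightarrow> nat" where
  "zz_occ Z e = card {i. i < length (zz_rep Z) \<and> zz_rep Z ! i = e}"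

definition typeI_edge :: "'v set set \<Rightarrow> 'v set list set set \<Rightarrow> 'v set \<Rightarrow> bool" where
  "typeI_edge F ZO e \<longleftrightarrow> e \<in> tri_edges F \<and>
     (\<exists>u v. e = {u, v} \<and> passes ZO u v > 0 \<and> passes ZO v u > 0)"

definition typeII_edge :: "'v set set \<Rightarrow> 'v set list set set \<Rightarrow> 'v set \<Rightarrow> bool" where
  "typeII_edge F ZO e \<longleftrightarrow> e \<in> tri_edges F \<and> \<not> typeI_edge F ZO e"

definition typeII_dir :: "'v set set \<Rightarrow> 'v set list set set \<Rightarrow> 'v \<Rightarrow> 'v \<Rightarrow> bool" where
  "typeII_dir F ZO u v \<longleftrightarrow> typeII_edge F ZO {u, v} \<and> passes ZO u v > 0"

definition typeI_vertex :: "'v set set \<Rightarrow> 'v set list set set \<Rightarrow> 'v \<Rightarrow> bool" where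
  "typeI_vertex F ZO x \<longleftrightarrow> x \<in> tri_vertices F \<and>
     (\<forall>e\<in>tri_edges F. x \<in> e \<longrightarrow> typeI_edge F ZO e)"

definition typeI_face :: "'v set set \<Rightarrow> 'v set list set set \<Rightarrow> 'v set \<Rightarrow> bool" where
  "typeI_face F ZO f \<longleftrightarrow> f \<in> F \<and>
     card {e \<in> tri_edges F. e \<subseteq> f \<and> typeI_edge F ZO e} = 2"

definition homogeneous :: "'v set set \<Rightarrow> 'v set list set set \<Rightarrow> 'v set list set \<Rightarrow> bool" where
  "homogeneous F ZO Z \<longleftrightarrow> (\<exists>es\<in>Z. length es mod 3 = 0 \<and>
     (\<forall>i<length es. (typeII_edge F ZO (es ! i) \<longleftrightarrow> i mod 3 = 0) \<and>
                     (i mod 3 \<noteq> 0 \<longrightarrow> typeI_edge F ZO (es ! i))))"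

definition special_pair :: "'v set set \<Rightarrow> 'v set list set set \<Rightarrow> 'v set \<Rightarrow> 'v set \<Rightarrow> bool" where
  "special_pair F ZO c1 c2 \<longleftrightarrow> c1 \<noteq> c2 \<and> typeII_edge F ZO c1 \<and> typeII_edge F ZO c2 \<and>
     c1 \<inter> c2 \<noteq> {} \<and>
     (\<exists>Z. ZO = {Z} \<and> (\<exists>es\<in>Z. \<exists>i1 i2 i3 i4. i1 < i2 \<and> i2 < i3 \<and> i3 < i4 \<and> i4 < length es \<and>
        es ! i1 = c1 \<and> es ! i2 = c2 \<and> es ! i3 = c1 \<and> es ! i4 = c2))"

definition concordant :: "'v set list set set \<Rightarrow> 'v set \<Rightarrow> 'v set \<Rightarrow> 'v set \<Rightarrow> 'v set \<Rightarrow> bool" where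
  "concordant ZO c1 c2 t1 t2 \<longleftrightarrow> c1 \<noteq> t1 \<and> c1 \<noteq> t2 \<and> c2 \<noteq> t1 \<and> c2 \<noteq> t2 \<and>
     (\<exists>Z. ZO = {Z} \<and> (\<exists>es\<in>Z. \<exists>j::nat \<Rightarrow> nat. strict_mono_on {0..7} j \<and> j 7 < length es \<and>
        es ! j 0 = c1 \<and> es ! j 1 = t1 \<and> es ! j 2 = c2 \<and> es ! j 3 = t2 \<and>
        es ! j 4 = c1 \<and> es ! j 5 = t1 \<and> es ! j 6 = c2 \<and> es ! j 7 = t2))"

datatype bp_vertex = Base nat | TopA | TopB

definition nxt :: "nat \<Rightarrow> nat \<Rightarrow> nat" where
  "nxt n i = i mod n + 1"

definition BP :: "nat \<Rightarrow> bp_vertex set set" where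
  "BP n = {{TopA, Base i, Base (nxt n i)} | i. i \<in> {1..n}} \<union>
          {{TopB, Base i, Base (nxt n i)} | i. i \<in> {1..n}}"

definition base_edge :: "nat \<Rightarrow> nat \<Rightarrow> bp_vertex set" where
  "base_edge n i = {Base i, Base (nxt n i)}"

end

theory Submission
  imports Defs
begin

(*
  Index the base vertices by integers modulo n. A zigzag of the bipyramid alternates one base edge
  with the two other edges of the next face, so it is determined by a starting base edge
  {x, x + d}, d = 1 or d = -1, and the apex it turns to; every block of three edges advances by 2d
  along the base and switches the apex. Hence a zigzag closes after m blocks, m the least even
  number with n dividing 2m: m = 2n for odd n (a single zigzag up to reversal), m = n for n = 2k
  with k odd (two zigzags, each passing every other base edge twice) and m = k for k even (four
  zigzags, each passing every other base edge once). Taking all zigzags with d = 1 gives a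
  z-orientation in which base edges are passed in one direction only and apex edges in both.
*)

lemma periodic_mod:
  fixes f :: "nat \<Rightarrow> 'a"
  assumes "\<And>t. f (t + p) = f t"
  shows "f (t mod p) = f t"
proof -
  have "f (u + p * c) = f u" for u c
  proof (induction c)
    case (Suc c) then show ?case using assms[of "u + p * c"] by (simp add: ac_simps)
  qed simp
  from this[of "t mod p" "t div p"] show ?thesis by simp
qed

lemma length_filter_rotate: "length (filter P (rotate k xs)) = length (filter P xs)"
proof -
  have "length (filter P (rotate k xs))
      = length (filter P (drop (k mod length xs) xs)) + length (filter P (take (k mod length xs) xs))"
    by (simp add: rotate_drop_take)
  also have "\<dots> = length (filter P xs)"
    by (metis append_take_drop_id filter_append length_append add.commute)
  finally show ?thesis .
qed

lemma zz_class_rotate: "zz_class (rotate c xs) = zz_class xs"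
proof (cases "xs = []")
  case False
  then have L: "length xs > 0" by simp
  show ?thesis unfolding zz_class_def
  proof (intro set_eqI iffI)
    fix ys assume "ys \<in> {rotate k (rotate c xs) |k. True}"
    then show "ys \<in> {rotate k xs |k. True}" by (auto simp: rotate_rotate)
  next
    fix ys assume "ys \<in> {rotate k xs |k. True}"
    then obtain k where ys: "ys = rotate k xs" by blast
    have le: "c \<le> length xs * c" using L by (simp add: Suc_le_eq)
    have "rotate (k + length xs * c - c) (rotate c xs) = rotate (k + length xs * c) xs"
    proof -
      have "k + length xs * c - c + c = k + length xs * c" using le by linarith
      then show ?thesis by (simp add: rotate_rotate)
    qed
    also have "\<dots> = rotate k xs" by (metis rotate_conv_mod mod_mult_self2)
    finally have "ys = rotate (k + length xs * c - c) (rotate c xs)" using ys by simp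
    then show "ys \<in> {rotate k (rotate c xs) |k. True}" by blast
  qed
qed simp

lemma zz_class_rotate1[simp]: "zz_class (rotate1 xs) = zz_class xs"
  using zz_class_rotate[of 1 xs] by simp

lemma zz_class_self: "xs \<in> zz_class xs"
  unfolding zz_class_def by (metis (mono_tags, lifting) mem_Collect_eq rotate0 id_apply)

lemma zz_rep_rotate: "\<exists>k. zz_rep (zz_class xs) = rotate k xs"
proof -
  have "zz_rep (zz_class xs) \<in> zz_class xs" unfolding zz_rep_def using zz_class_self by (metis someI)
  then show ?thesis unfolding zz_class_def by blast
qed

lemma zz_rev_zz_class: "zz_rev (zz_class xs) = zz_class (rev xs)"
proof (cases "xs = []")
  case True then show ?thesis by (simp add: zz_rev_def zz_class_def)
next
  case False
  then have L: "0 < length xs" by simp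
  show ?thesis unfolding zz_rev_def zz_class_def
  proof (intro set_eqI iffI)
    fix ys assume "ys \<in> rev ` {rotate k xs |k. True}"
    then obtain k where ys: "ys = rev (rotate k xs)" by blast
    define j where "j = length xs - k mod length xs"
    have "rotate j (rev xs) = rev (rotate (length xs - j mod length xs) xs)" by (rule rotate_rev)
    also have "rotate (length xs - j mod length xs) xs = rotate k xs"
    proof (cases "k mod length xs = 0")
      case True
      then have "j = length xs" unfolding j_def by simp
      then show ?thesis using True by (metis diff_zero mod_self rotate_conv_mod rotate_length01 rotate_id)
    next
      case False
      then have "j < length xs" "0 < j" unfolding j_def using L by auto
      then have "length xs - j mod length xs = k mod length xs" unfolding j_def by simp
      then show ?thesis by (metis rotate_conv_mod)
    qed
    finally have "ys = rotate j (rev xs)" using ys by simp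
    then show "ys \<in> {rotate k (rev xs) |k. True}" by blast
  next
    fix ys assume "ys \<in> {rotate k (rev xs) |k. True}"
    then obtain k where "ys = rotate k (rev xs)" by blast
    then have "ys = rev (rotate (length xs - k mod length xs) xs)" by (simp add: rotate_rev)
    then show "ys \<in> rev ` {rotate k xs |k. True}" by blast
  qed
qed

lemma length_dvd_period:
  assumes ne: "xs \<noteq> []" and prim: "\<forall>c. 0 < c \<and> c < length xs \<longrightarrow> rotate c xs \<noteq> xs"
    and per: "\<And>t. xs ! ((t + p) mod length xs) = xs ! (t mod length xs)"
  shows "length xs dvd p"
proof (rule ccontr)
  assume nd: "\<not> length xs dvd p"
  define c where "c = p mod length xs"
  have c: "0 < c" "c < length xs" using nd ne unfolding c_def by (auto simp: dvd_eq_mod_eq_0)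
  have "rotate c xs = xs"
  proof (rule nth_equalityI)
    fix i assume i: "i < length (rotate c xs)"
    have "rotate c xs ! i = xs ! ((c + i) mod length xs)" using i by (simp add: nth_rotate)
    also have "(c + i) mod length xs = (i + p) mod length xs"
      unfolding c_def by (metis add.commute mod_add_right_eq)
    also have "xs ! \<dots> = xs ! (i mod length xs)" by (rule per)
    also have "\<dots> = xs ! i" using i by simp
    finally show "rotate c xs ! i = xs ! i" .
  qed simp
  then show False using prim c by blast
qed

lemma ex_window_iff:
  fixes P :: "nat \<Rightarrow> bool"
  assumes per: "\<And>t. P (t + L) = P t" and L: "0 < L"
  shows "(\<exists>i<L. P (k + i)) \<longleftrightarrow> (\<exists>t. P t)"
proof
  assume "\<exists>t. P t"
  then obtain t where t: "P t" by blast
  define i where "i = (t + L * k - k) mod L"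
  have kk: "k \<le> L * k" using L by simp
  have "(k + i) mod L = (k + (t + L * k - k)) mod L" unfolding i_def by (simp add: mod_add_right_eq)
  also have "k + (t + L * k - k) = t + L * k" using kk by linarith
  also have "(t + L * k) mod L = t mod L" by simp
  finally have "P (k + i)" using periodic_mod[of P L, OF per] t by metis
  moreover have "i < L" unfolding i_def using L by simp
  ultimately show "\<exists>i<L. P (k + i)" by blast
qed blast

lemma Un_edges_neq: "e0 \<inter> e2 = {} \<Longrightarrow> \<not> e0 \<subseteq> e1 \<Longrightarrow> e0 \<union> e1 \<noteq> e1 \<union> e2" by blast

lemma interleaving_of_half_shift:
  fixes n h p a1 a2 sg c :: int
  assumes n: "n = 2 * h - 1" and h: "2 \<le> h" and p: "p = h \<or> p = h - 1" and sg: "sg = 1 \<or> sg = -1"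
    and a: "0 \<le> a1" "a1 < n" "0 \<le> a2" "a2 < n" and c: "a2 - a1 - sg * h = n * c"
    and ne: "a1 \<noteq> 0" "a1 \<noteq> p" "a2 \<noteq> 0" "a2 \<noteq> p"
  shows "(0 < a1 \<and> a1 < p \<and> p < a2) \<or> (0 < a2 \<and> a2 < p \<and> p < a1)"
proof -
  have sh: "sg * h = h \<or> sg * h = -h" using sg by auto
  have "c \<le> 1"
  proof (rule ccontr)
    assume "\<not> c \<le> 1"
    then have "n * c \<ge> n * 2" using n h by (intro mult_left_mono) auto
    then show False using c a sh n h by linarith
  qed
  moreover have "c \<ge> -1"
  proof (rule ccontr)
    assume "\<not> c \<ge> -1"
    then have "n * c \<le> n * (-2)" using n h by (intro mult_left_mono) auto
    then show False using c a sh n h by linarith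
  qed
  ultimately have "c = -1 \<or> c = 0 \<or> c = 1" by linarith
  then have "n * c = -n \<or> n * c = 0 \<or> n * c = n" by auto
  then have "a2 = a1 + h \<or> a2 = a1 - h + 1 \<or> a1 = a2 + h \<or> a1 = a2 - h + 1"
    using sh c a n h by (elim disjE) linarith+
  then show ?thesis using p a ne n h by (elim disjE) auto
qed

lemma sorted_nth_strict_mono_on:
  "sorted_wrt (<) xs \<Longrightarrow> length xs = Suc m \<Longrightarrow> strict_mono_on {0..m} (\<lambda>k. xs ! k)"
  unfolding strict_mono_on_def by (auto intro: sorted_wrt_nth_less)

section \<open>The bipyramid\<close>

locale bipyramid =
  fixes n :: nat
  assumes three_le_n: "3 \<le> n"
begin

definition vtx :: "int \<Rightarrow> bp_vertex" where "vtx x = Base (nat (x mod int n) + 1)"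
definition apex :: "bool \<Rightarrow> bp_vertex" where "apex T = (if T then TopA else TopB)"
definition bedge :: "int \<Rightarrow> bp_vertex set" where "bedge x = {vtx x, vtx (x + 1)}"
definition face :: "bool \<Rightarrow> int \<Rightarrow> bp_vertex set" where "face T x = {apex T, vtx x, vtx (x + 1)}"

lemma n_pos: "int n > 0" using three_le_n by simp

lemma n_ne_small[simp]: "n \<noteq> 0" "n \<noteq> Suc 0" using three_le_n by auto

lemma vtx_eq_iff: "vtx x = vtx y \<longleftrightarrow> int n dvd (x - y)"
proof -
  have "vtx x = vtx y \<longleftrightarrow> x mod int n = y mod int n"
    unfolding vtx_def using n_pos by (simp add: nat_eq_iff)
  also have "\<dots> \<longleftrightarrow> int n dvd (x - y)" by (simp add: mod_eq_dvd_iff)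
  finally show ?thesis .
qed

lemma vtx_cong: "int n dvd (x - y) \<Longrightarrow> vtx x = vtx y" by (simp add: vtx_eq_iff)

lemma not_dvd_small[simp]: "\<not> int n dvd 1" "\<not> int n dvd 2" "\<not> int n dvd -1" "\<not> int n dvd -2"
  using zdvd_imp_le[of "int n" 1] zdvd_imp_le[of "int n" 2] three_le_n by auto

lemma vtx_ne_apex[simp]: "vtx x \<noteq> apex T" "apex T \<noteq> vtx x"
  by (auto simp: vtx_def apex_def)

lemma apex_eq_iff[simp]: "apex T = apex T' \<longleftrightarrow> T = T'" by (auto simp: apex_def)

lemma vtx_ne_neighbour[simp]: "vtx x \<noteq> vtx (x + 1)" "vtx (x + 1) \<noteq> vtx x" "vtx x \<noteq> vtx (x - 1)" "vtx (x - 1) \<noteq> vtx x"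
  by (simp_all add: vtx_eq_iff)

lemma Base_eq_vtx: "i \<in> {1..n} \<Longrightarrow> Base i = vtx (int i - 1)"
  unfolding vtx_def by (auto simp: nat_diff_distrib)

lemma Base_nxt_eq_vtx: "Base (nxt n i) = vtx (int i)"
  unfolding vtx_def nxt_def by (simp add: nat_mod_as_int[symmetric] zmod_int[symmetric] nat_int)

lemma nat_mod_n_less: "Suc (nat (x mod int n)) \<le> n"
  using n_pos by (simp add: Suc_le_eq nat_less_iff)

lemma BP_eq_faces: "BP n = {face T j | T j. True}"
proof (intro set_eqI iffI)
  fix f assume "f \<in> BP n"
  then obtain i T where i: "i \<in> {1..n}" and f: "f = {apex T, Base i, Base (nxt n i)}"
  proof -
    assume r: "\<And>i T. i \<in> {1..n} \<Longrightarrow> f = {apex T, Base i, Base (nxt n i)} \<Longrightarrow> thesis"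
    from \<open>f \<in> BP n\<close> consider i where "i \<in> {1..n}" "f = {TopA, Base i, Base (nxt n i)}"
      | i where "i \<in> {1..n}" "f = {TopB, Base i, Base (nxt n i)}" unfolding BP_def by blast
    then show thesis by cases (use r[of _ True] r[of _ False] in \<open>simp_all add: apex_def\<close>)
  qed
  have "f = face T (int i - 1)" unfolding face_def f Base_eq_vtx[OF i] Base_nxt_eq_vtx by simp
  then show "f \<in> {face T j | T j. True}" by blast
next
  fix f assume "f \<in> {face T j | T j. True}"
  then obtain T j where f: "f = face T j" by blast
  define i where "i = nat (j mod int n) + 1"
  have i: "i \<in> {1..n}" unfolding i_def using nat_mod_n_less by auto
  have 1: "vtx j = Base i" unfolding i_def vtx_def by simp
  have 2: "vtx (j + 1) = Base (nxt n i)" unfolding Base_nxt_eq_vtx i_def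
    by (rule vtx_cong) (use n_pos in \<open>simp add: mod_eq_dvd_iff[symmetric] mod_add_left_eq\<close>)
  have "f = {apex T, Base i, Base (nxt n i)}" unfolding f face_def 1 2 ..
  then show "f \<in> BP n" using i unfolding BP_def apex_def by (cases T) auto
qed

lemma face_in_BP[simp]: "face T j \<in> BP n" unfolding BP_eq_faces by blast

lemma BP_faceE: "f \<in> BP n \<Longrightarrow> (\<And>T j. f = face T j \<Longrightarrow> P) \<Longrightarrow> P"
  unfolding BP_eq_faces by blast

lemma face_cong: "int n dvd (j - j') \<Longrightarrow> face T j = face T j'"
  unfolding face_def using vtx_cong[of j j'] vtx_cong[of "j + 1" "j' + 1"] by simp

lemma card_BP_face: "f \<in> BP n \<Longrightarrow> card f = 3"
  by (erule BP_faceE) (simp add: face_def card_insert_if)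

lemma edge_of_face_cases: "card e = 2 \<Longrightarrow> e \<subseteq> face T j \<Longrightarrow>
   e = {apex T, vtx j} \<or> e = {apex T, vtx (j + 1)} \<or> e = {vtx j, vtx (j + 1)}"
  unfolding face_def by (auto simp: card_2_iff)

lemma face_of_bedge: "{vtx y, vtx (y + 1)} \<subseteq> face T j \<Longrightarrow> face T j = face T y"
proof -
  assume "{vtx y, vtx (y + 1)} \<subseteq> face T j"
  then have "vtx y = vtx j \<or> vtx y = vtx (j + 1)" "vtx (y + 1) = vtx j \<or> vtx (y + 1) = vtx (j + 1)"
    unfolding face_def by auto
  then have "int n dvd (j - y)" unfolding vtx_eq_iff
    by (smt (verit) dvd_diff not_dvd_small(1) not_dvd_small(2) dvd_minus_iff)
  then show ?thesis by (rule face_cong)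
qed

lemma face_of_apex_edge: "{apex T, vtx y} \<subseteq> face T' j \<Longrightarrow>
    T' = T \<and> (face T' j = face T y \<or> face T' j = face T (y - 1))"
proof -
  assume a: "{apex T, vtx y} \<subseteq> face T' j"
  then have "T' = T" unfolding face_def by auto
  moreover have "vtx y = vtx j \<or> vtx y = vtx (j + 1)" using a unfolding face_def by auto
  then have "int n dvd (j - y) \<or> int n dvd (j - (y - 1))" unfolding vtx_eq_iff
    by (metis diff_diff_eq2 diff_minus_eq_add dvd_minus_iff minus_diff_eq)
  ultimately show ?thesis using face_cong by blast
qed

lemma edge_in_two_faces:
  assumes e: "card e = 2" and f: "f1 \<in> BP n" "f2 \<in> BP n" "f3 \<in> BP n"
    and s: "e \<subseteq> f1" "e \<subseteq> f2" "e \<subseteq> f3" and d: "f1 \<noteq> f2" "f1 \<noteq> f3"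
  shows "f2 = f3"
proof -
  obtain T1 j1 where 1: "f1 = face T1 j1" using f(1) by (rule BP_faceE)
  obtain T2 j2 where 2: "f2 = face T2 j2" using f(2) by (rule BP_faceE)
  obtain T3 j3 where 3: "f3 = face T3 j3" using f(3) by (rule BP_faceE)
  from edge_of_face_cases[OF e s(1)[unfolded 1]]
  consider "e = {apex T1, vtx j1}" | "e = {apex T1, vtx (j1 + 1)}" | "e = {vtx j1, vtx (j1 + 1)}" by blast
  then show ?thesis
  proof cases
    case c: 3
    have "f2 = face T2 j1" using face_of_bedge[of j1 T2 j2] s(2) 2 c by simp
    moreover have "f3 = face T3 j1" using face_of_bedge[of j1 T3 j3] s(3) 3 c by simp
    ultimately show ?thesis using d 1 by (cases T1; cases T2; cases T3) auto
  next
    case c: 1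
    have "f2 = face T1 j1 \<or> f2 = face T1 (j1 - 1)" "f3 = face T1 j1 \<or> f3 = face T1 (j1 - 1)"
      "f1 = face T1 j1 \<or> f1 = face T1 (j1 - 1)"
      using face_of_apex_edge s 1 2 3 c by metis+
    then show ?thesis using d by metis
  next
    case c: 2
    have "f2 = face T1 (j1 + 1) \<or> f2 = face T1 j1" "f3 = face T1 (j1 + 1) \<or> f3 = face T1 j1"
      "f1 = face T1 (j1 + 1) \<or> f1 = face T1 j1"
      using face_of_apex_edge[of T1 "j1 + 1"] s 1 2 3 c by auto
    then show ?thesis using d by metis
  qed
qed

lemma tri_edges_BP_iff: "e \<in> tri_edges (BP n) \<longleftrightarrow> (\<exists>T y. e = {apex T, vtx y}) \<or> (\<exists>y. e = bedge y)"
proof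
  assume "e \<in> tri_edges (BP n)"
  then obtain f where e: "card e = 2" "f \<in> BP n" "e \<subseteq> f" unfolding tri_edges_def by blast
  obtain T j where "f = face T j" using e(2) by (rule BP_faceE)
  with e consider "e = {apex T, vtx j}" | "e = {apex T, vtx (j + 1)}" | "e = bedge j"
    unfolding bedge_def using edge_of_face_cases by blast
  then show "(\<exists>T y. e = {apex T, vtx y}) \<or> (\<exists>y. e = bedge y)" by cases blast+
next
  have "{apex T, vtx y} \<in> tri_edges (BP n)" for T y
  proof -
    have "{apex T, vtx y} \<subseteq> face T y" "card {apex T, vtx y} = 2"
      unfolding face_def by (auto simp: card_insert_if)
    then show ?thesis unfolding tri_edges_def using face_in_BP by blast
  qed
  moreover have "bedge y \<in> tri_edges (BP n)" for y
  proof -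
    have "bedge y \<subseteq> face True y" "card (bedge y) = 2"
      unfolding face_def bedge_def by (auto simp: card_insert_if)
    then show ?thesis unfolding tri_edges_def using face_in_BP by blast
  qed
  ultimately show "(\<exists>T y. e = {apex T, vtx y}) \<or> (\<exists>y. e = bedge y) \<Longrightarrow> e \<in> tri_edges (BP n)"
    by blast
qed

lemma card_tri_edge: "e \<in> tri_edges (BP n) \<Longrightarrow> card e = 2" unfolding tri_edges_def by blast

lemma bedge_eq_iff: "bedge x = bedge y \<longleftrightarrow> int n dvd (x - y)"
proof
  assume "bedge x = bedge y"
  then have "(vtx x = vtx y \<and> vtx (x + 1) = vtx (y + 1)) \<or> (vtx x = vtx (y + 1) \<and> vtx (x + 1) = vtx y)"
    unfolding bedge_def by (auto simp: doubleton_eq_iff)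
  then show "int n dvd (x - y)" unfolding vtx_eq_iff
  proof
    assume "int n dvd x - (y + 1) \<and> int n dvd x + 1 - y"
    then have "int n dvd (x + 1 - y) - (x - (y + 1))" by (blast intro: dvd_diff)
    then show ?thesis by simp
  qed simp
next
  assume "int n dvd (x - y)"
  then show "bedge x = bedge y" using vtx_cong[of x y] vtx_cong[of "x + 1" "y + 1"] by (simp add: bedge_def)
qed

lemma bedge_ne_apex_edge[simp]: "bedge x \<noteq> {apex T, vtx y}" "{apex T, vtx y} \<noteq> bedge x"
  unfolding bedge_def by (auto simp: doubleton_eq_iff)

section \<open>Zigzags of the bipyramid\<close>

definition zz_block :: "int \<Rightarrow> int \<Rightarrow> bp_vertex \<Rightarrow> nat \<Rightarrow> bp_vertex set" where
  "zz_block d x A r =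
     (if r = 0 then {vtx x, vtx (x + d)} else if r = 1 then {vtx (x + d), A} else {vtx (x + 2 * d), A})"

text \<open>The t-th edge of the zigzag that starts with the base edge {vtx s, vtx (s + d)},
  d = 1 or d = -1, and then turns to apex T. It consists of blocks of three edges (a base edge and
  the two other edges of the next face), each block advancing by 2d and switching the apex.\<close>
definition zz_edge :: "int \<Rightarrow> int \<Rightarrow> bool \<Rightarrow> nat \<Rightarrow> bp_vertex set" where
  "zz_edge d s T t = zz_block d (s + 2 * d * int (t div 3)) (apex (T = even (t div 3))) (t mod 3)"

lemma zz_edge_first_block:
  "zz_edge d s T 0 = {vtx s, vtx (s + d)}" "zz_edge d s T 1 = {vtx (s + d), apex T}"
  "zz_edge d s T (Suc 0) = {vtx (s + d), apex T}" "zz_edge d s T 2 = {vtx (s + 2 * d), apex T}"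
  "zz_edge d s T 3 = {vtx (s + 2 * d), vtx (s + 2 * d + d)}"
  by (simp_all add: zz_edge_def zz_block_def)

lemma zz_block_cong: "int n dvd (x - x') \<Longrightarrow> zz_block d x A r = zz_block d x' A r"
  unfolding zz_block_def
  using vtx_cong[of "x + d" "x' + d"] vtx_cong[of "x + 2 * d" "x' + 2 * d"] vtx_cong[of x x'] by simp

lemma zz_edge_cong: "int n dvd (s - s') \<Longrightarrow> zz_edge d s T t = zz_edge d s' T t"
  unfolding zz_edge_def by (rule zz_block_cong) simp

lemma zz_edge_add_blocks: "zz_edge d s T (t + 3 * c) = zz_edge d (s + 2 * d * int c) (T = even c) t"
proof -
  have 1: "(t + 3 * c) div 3 = t div 3 + c" "(t + 3 * c) mod 3 = t mod 3" by simp_all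
  have 2: "s + 2 * d * int (t div 3 + c) = s + 2 * d * int c + 2 * d * int (t div 3)"
    by (simp add: algebra_simps)
  have 3: "(T = even (t div 3 + c)) = ((T = even c) = even (t div 3))" by auto
  show ?thesis unfolding zz_edge_def 1 2 3 ..
qed

lemma zz_edge_block:
  "zz_edge d s T (3 * q) = {vtx (s + 2 * d * int q), vtx (s + 2 * d * int q + d)}"
  "zz_edge d s T (3 * q + 1) = {vtx (s + 2 * d * int q + d), apex (T = even q)}"
  using zz_edge_add_blocks[of d s T 0 q] zz_edge_add_blocks[of d s T 1 q]
  by (simp_all add: zz_edge_first_block add.commute)

lemma zz_edge_apex: "t mod 3 \<noteq> 0 \<Longrightarrow> \<exists>x T'. zz_edge d s T t = {vtx x, apex T'}"
  unfolding zz_edge_def zz_block_def by auto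

lemma zz_edge_base_index:
  assumes "zz_edge d s T t = {vtx x, vtx y}"
  obtains q where "t = 3 * q"
proof -
  have "t mod 3 = 0"
  proof (rule ccontr)
    assume "t mod 3 \<noteq> 0"
    with zz_edge_apex obtain x' T' where "zz_edge d s T t = {vtx x', apex T'}" by blast
    with assms show False by (auto simp: doubleton_eq_iff)
  qed
  then show thesis using that by (metis mult_div_mod_eq add_0_right mult.commute)
qed

lemma vtx_pair_eq_imp_dvd:
  assumes d: "d = 1 \<or> d = -1" and e: "{vtx x, vtx (x + d)} = {vtx y, vtx (y + d)}"
  shows "int n dvd (x - y)"
proof -
  from e have "vtx x = vtx y \<or> (vtx x = vtx (y + d) \<and> vtx (x + d) = vtx y)"
    by (auto simp: doubleton_eq_iff)
  then show ?thesis unfolding vtx_eq_iff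
  proof
    assume "int n dvd x - (y + d) \<and> int n dvd x + d - y"
    then have "int n dvd (x + d - y) - (x - (y + d))" by (blast intro: dvd_diff)
    moreover have "(x + d - y) - (x - (y + d)) = 2 * d" by simp
    ultimately show ?thesis using d by auto
  qed
qed

text \<open>The number of blocks after which a zigzag closes up: the least positive even e with
  n dividing 2e (lemma period_blocks_le).\<close>
definition period_blocks :: nat where
  "period_blocks = (if odd n then 2 * n else if odd (n div 2) then n else n div 2)"

definition zz_len :: nat where "zz_len = 3 * period_blocks"

lemma period_blocks_pos: "0 < period_blocks" using three_le_n unfolding period_blocks_def by auto

lemma zz_len_pos: "0 < zz_len" using period_blocks_pos unfolding zz_len_def by simp

lemma even_period_blocks: "even period_blocks" unfolding period_blocks_def by auto

lemma n_dvd_period_blocks: "int n dvd 2 * int period_blocks"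
proof -
  have "n dvd 2 * period_blocks" unfolding period_blocks_def by auto
  then show ?thesis by (metis of_nat_dvd_iff of_nat_mult of_nat_numeral)
qed

lemma period_blocks_le:
  assumes "0 < e" "int n dvd 2 * int e" "even e"
  shows "period_blocks \<le> e"
proof -
  have "n dvd 2 * e" using assms(2) by (metis of_nat_dvd_iff of_nat_mult of_nat_numeral)
  then obtain c where c: "2 * e = n * c" by (auto elim: dvdE)
  show ?thesis
  proof (cases "odd n")
    case True
    then have "even c" using c by (metis dvd_triv_left even_mult_iff)
    then obtain c' where "c = 2 * c'" by (auto elim: evenE)
    then have e: "e = n * c'" using c by simp
    then have "even c'" using assms(3) True by simp
    then obtain c'' where "c' = 2 * c''" by (auto elim: evenE)
    then have "e = 2 * n * c''" using e by simp
    moreover have "c'' \<noteq> 0" using assms(1) \<open>e = 2 * n * c''\<close> by auto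
    ultimately show ?thesis using True unfolding period_blocks_def by simp
  next
    case False
    then obtain k where k: "n = 2 * k" by (auto elim: evenE)
    then have e: "e = k * c" using c by simp
    have "c \<noteq> 0" using assms(1) e by auto
    show ?thesis
    proof (cases "odd k")
      case True
      then have "even c" using e assms(3) by simp
      then obtain c' where "c = 2 * c'" by (auto elim: evenE)
      then have "e = n * c'" "c' \<noteq> 0" using e k \<open>c \<noteq> 0\<close> by auto
      then show ?thesis using True k unfolding period_blocks_def by simp
    next
      case False
      then show ?thesis using e k \<open>c \<noteq> 0\<close> unfolding period_blocks_def by simp
    qed
  qed
qed

lemma zz_edge_period: "zz_edge d s T (t + zz_len) = zz_edge d s T t"
proof -
  have "zz_edge d s T (t + zz_len) = zz_edge d (s + 2 * d * int period_blocks) T t"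
    unfolding zz_len_def zz_edge_add_blocks using even_period_blocks by simp
  also have "\<dots> = zz_edge d s T t"
  proof (rule zz_edge_cong)
    have e: "s + 2 * d * int period_blocks - s = (2 * int period_blocks) * d" by (simp add: ac_simps)
    show "int n dvd s + 2 * d * int period_blocks - s" unfolding e by (rule dvd_mult2[OF n_dvd_period_blocks])
  qed
  finally show ?thesis .
qed

lemma zz_edge_mod: "zz_edge d s T (t mod zz_len) = zz_edge d s T t"
  by (rule periodic_mod) (rule zz_edge_period)

definition zz_list :: "int \<Rightarrow> int \<Rightarrow> bool \<Rightarrow> bp_vertex set list" where
  "zz_list d s T = map (zz_edge d s T) [0..<zz_len]"

lemma length_zz_list[simp]: "length (zz_list d s T) = zz_len" by (simp add: zz_list_def)

lemma nth_zz_list: "i < zz_len \<Longrightarrow> zz_list d s T ! i = zz_edge d s T i" by (simp add: zz_list_def)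

lemma nth_mod_zz_list: "zz_list d s T ! (i mod zz_len) = zz_edge d s T i"
  using zz_len_pos by (simp add: nth_zz_list zz_edge_mod)

lemma nth_rotate_zz_list: "i < zz_len \<Longrightarrow> rotate k (zz_list d s T) ! i = zz_edge d s T (k + i)"
  by (simp add: nth_rotate nth_mod_zz_list)

lemma zz_list_cong: "int n dvd (s - s') \<Longrightarrow> zz_list d s T = zz_list d s' T"
  unfolding zz_list_def using zz_edge_cong by simp

lemma zz_list_shift:
  assumes "int n dvd (s0 + 2 * d * int c - s)" "T = (T0 = even c)"
  shows "zz_list d s T = rotate (3 * c) (zz_list d s0 T0)"
proof (rule nth_equalityI)
  fix i assume "i < length (zz_list d s T)"
  moreover have "zz_edge d s T i = zz_edge d s0 T0 (i + 3 * c)"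
    unfolding zz_edge_add_blocks assms(2)[symmetric]
    by (rule zz_edge_cong) (use assms(1) in \<open>simp add: dvd_diff_commute\<close>)
  ultimately show "zz_list d s T ! i = rotate (3 * c) (zz_list d s0 T0) ! i"
    by (simp add: nth_rotate_zz_list nth_zz_list add.commute)
qed simp

lemma zz_class_zz_list_shift:
  "int n dvd (s0 + 2 * d * int c - s) \<Longrightarrow> T = (T0 = even c) \<Longrightarrow>
    zz_class (zz_list d s T) = zz_class (zz_list d s0 T0)"
  using zz_list_shift zz_class_rotate by metis

lemma rotate_zz_list_eq:
  assumes d: "d = 1 \<or> d = -1" and eq: "zz_list d s T = rotate k (zz_list d s' T')"
  obtains q where "k = 3 * q" "int n dvd (s - s' - 2 * d * int q)" "T = (T' = even q)"
proof -
  have z: "zz_edge d s T i = zz_edge d s' T' (k + i)" if "i < zz_len" for i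
    using eq that by (metis nth_rotate_zz_list nth_zz_list)
  have z0: "zz_edge d s' T' k = {vtx s, vtx (s + d)}"
    using z[of 0] zz_len_pos by (simp add: zz_edge_first_block)
  then obtain q where k: "k = 3 * q" by (rule zz_edge_base_index)
  have "zz_edge d s' T' (k + 1) = {vtx (s + d), apex T}"
    using z[of 1] zz_len_pos period_blocks_pos by (simp add: zz_edge_first_block zz_len_def)
  then have "T = (T' = even q)" unfolding k zz_edge_block by (auto simp: doubleton_eq_iff)
  moreover from z0 have "int n dvd (s' + 2 * d * int q) - s"
    unfolding k zz_edge_block by (intro vtx_pair_eq_imp_dvd[OF d]) simp
  then have "int n dvd (s - s' - 2 * d * int q)" by (simp add: dvd_diff_commute algebra_simps)
  ultimately show thesis using that k by blast
qed

lemma zz_list_primitive: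
  assumes d: "d = 1 \<or> d = -1" and c: "0 < c" "c < zz_len"
  shows "rotate c (zz_list d s T) \<noteq> zz_list d s T"
proof
  assume "rotate c (zz_list d s T) = zz_list d s T"
  then obtain q where q: "c = 3 * q" "int n dvd (s - s - 2 * d * int q)" "T = (T = even q)"
    using rotate_zz_list_eq[OF d] by metis
  then have "int n dvd 2 * int q" "even q" "0 < q" using d c by auto
  then have "period_blocks \<le> q" by (intro period_blocks_le)
  then show False using c q unfolding zz_len_def by simp
qed

definition zz_triple :: "bp_vertex set \<Rightarrow> bp_vertex set \<Rightarrow> bp_vertex set \<Rightarrow> bool" where
  "zz_triple e0 e1 e2 \<longleftrightarrow> e0 \<in> tri_edges (BP n) \<and> e1 \<in> tri_edges (BP n) \<and> e0 \<noteq> e1 \<and>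
     (\<exists>f\<in>BP n. e0 \<union> e1 \<subseteq> f) \<and> e0 \<union> e1 \<noteq> e1 \<union> e2 \<and> e0 \<inter> e2 = {}"

lemma is_zz_list_BP_iff: "is_zz_list (BP n) es \<longleftrightarrow> es \<noteq> [] \<and>
  (\<forall>i<length es. zz_triple (es ! i) (es ! ((i + 1) mod length es)) (es ! ((i + 2) mod length es))) \<and>
  (\<forall>d. 0 < d \<and> d < length es \<longrightarrow> rotate d es \<noteq> es)"
  unfolding is_zz_list_def zz_triple_def Let_def ..

lemma apex_edge_in_tri_edges[simp]: "{apex T, vtx y} \<in> tri_edges (BP n)" "{vtx y, apex T} \<in> tri_edges (BP n)"
  unfolding tri_edges_BP_iff by (auto simp: insert_commute)

lemma base_edge_in_tri_edges: "y = x + 1 \<or> x = y + 1 \<Longrightarrow> {vtx x, vtx y} \<in> tri_edges (BP n)"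
  unfolding tri_edges_BP_iff bedge_def by (auto simp: insert_commute)

lemma subset_face_BP: "A \<subseteq> face T j \<Longrightarrow> \<exists>f\<in>BP n. A \<subseteq> f" using face_in_BP by blast

lemma zz_edge_first_block_pos:
  "zz_edge 1 s T 0 = {vtx s, vtx (s + 1)}" "zz_edge 1 s T 1 = {vtx (s + 1), apex T}"
  "zz_edge 1 s T 2 = {vtx (s + 2), apex T}" "zz_edge 1 s T 3 = {vtx (s + 2), vtx (s + 3)}"
  "zz_edge 1 s T 4 = {vtx (s + 3), apex (\<not> T)}"
  by (simp_all add: zz_edge_def zz_block_def add.assoc)

lemma zz_edge_first_block_neg:
  "zz_edge (-1) s T 0 = {vtx s, vtx (s - 1)}" "zz_edge (-1) s T 1 = {vtx (s - 1), apex T}"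
  "zz_edge (-1) s T 2 = {vtx (s - 2), apex T}" "zz_edge (-1) s T 3 = {vtx (s - 2), vtx (s - 3)}"
  "zz_edge (-1) s T 4 = {vtx (s - 3), apex (\<not> T)}"
  by (simp_all add: zz_edge_def zz_block_def algebra_simps)

lemma zz_triple_first_block:
  assumes d: "d = 1 \<or> d = -1" and r: "r < 3"
  shows "zz_triple (zz_edge d s T r) (zz_edge d s T (r + 1)) (zz_edge d s T (r + 2))"
proof -
  have p0: "zz_triple (zz_edge 1 s T 0) (zz_edge 1 s T 1) (zz_edge 1 s T 2)"
    unfolding zz_triple_def zz_edge_first_block_pos
    by (intro conjI base_edge_in_tri_edges subset_face_BP[of _ T s] Un_edges_neq)
      (auto simp: face_def doubleton_eq_iff vtx_eq_iff)
  have p1: "zz_triple (zz_edge 1 s T 1) (zz_edge 1 s T 2) (zz_edge 1 s T 3)"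
    unfolding zz_triple_def zz_edge_first_block_pos
    by (intro conjI base_edge_in_tri_edges subset_face_BP[of _ T "s + 1"] Un_edges_neq)
      (auto simp: face_def doubleton_eq_iff vtx_eq_iff add.assoc)
  have p2: "zz_triple (zz_edge 1 s T 2) (zz_edge 1 s T 3) (zz_edge 1 s T 4)"
    unfolding zz_triple_def zz_edge_first_block_pos
    by (intro conjI base_edge_in_tri_edges subset_face_BP[of _ T "s + 2"] Un_edges_neq)
      (auto simp: face_def doubleton_eq_iff vtx_eq_iff add.assoc)
  have m0: "zz_triple (zz_edge (-1) s T 0) (zz_edge (-1) s T 1) (zz_edge (-1) s T 2)"
    unfolding zz_triple_def zz_edge_first_block_neg
    by (intro conjI base_edge_in_tri_edges subset_face_BP[of _ T "s - 1"] Un_edges_neq)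
      (auto simp: face_def doubleton_eq_iff vtx_eq_iff)
  have m1: "zz_triple (zz_edge (-1) s T 1) (zz_edge (-1) s T 2) (zz_edge (-1) s T 3)"
    unfolding zz_triple_def zz_edge_first_block_neg
    by (intro conjI base_edge_in_tri_edges subset_face_BP[of _ T "s - 2"] Un_edges_neq)
      (auto simp: face_def doubleton_eq_iff vtx_eq_iff)
  have m2: "zz_triple (zz_edge (-1) s T 2) (zz_edge (-1) s T 3) (zz_edge (-1) s T 4)"
    unfolding zz_triple_def zz_edge_first_block_neg
    by (intro conjI base_edge_in_tri_edges subset_face_BP[of _ T "s - 3"] Un_edges_neq)
      (auto simp: face_def doubleton_eq_iff vtx_eq_iff)
  have "r = 0 \<or> r = 1 \<or> r = 2" using r by auto
  then show ?thesis using d p0 p1 p2 m0 m1 m2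
    by (elim disjE) (simp_all add: numeral_eq_Suc)
qed

lemma zz_triple_zz_edge:
  assumes "d = 1 \<or> d = -1"
  shows "zz_triple (zz_edge d s T t) (zz_edge d s T (t + 1)) (zz_edge d s T (t + 2))"
proof -
  have "zz_triple (zz_edge d s T (t mod 3 + 3 * (t div 3))) (zz_edge d s T ((t mod 3 + 1) + 3 * (t div 3)))
      (zz_edge d s T ((t mod 3 + 2) + 3 * (t div 3)))"
    unfolding zz_edge_add_blocks by (rule zz_triple_first_block[OF assms]) simp
  then show ?thesis by (simp add: ac_simps)
qed

lemma is_zz_list_zz_list:
  assumes d: "d = 1 \<or> d = -1"
  shows "is_zz_list (BP n) (zz_list d s T)"
  unfolding is_zz_list_BP_iff
proof (intro conjI allI impI)
  show "zz_list d s T \<noteq> []" using zz_len_pos by (simp add: zz_list_def)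
next
  fix i assume "i < length (zz_list d s T)"
  then show "zz_triple (zz_list d s T ! i) (zz_list d s T ! ((i + 1) mod length (zz_list d s T)))
      (zz_list d s T ! ((i + 2) mod length (zz_list d s T)))"
    using zz_triple_zz_edge[OF d, of s T i] by (simp add: nth_zz_list nth_mod_zz_list)
next
  fix c assume "0 < c \<and> c < length (zz_list d s T)"
  then show "rotate c (zz_list d s T) \<noteq> zz_list d s T" using zz_list_primitive[OF d] by simp
qed

lemma Un_edges_eq_face:
  assumes "e0 \<in> tri_edges (BP n)" "e1 \<in> tri_edges (BP n)" "e0 \<noteq> e1" "e0 \<union> e1 \<subseteq> f" "f \<in> BP n"
  shows "e0 \<union> e1 = f"
proof -
  have c: "card e0 = 2" "card e1 = 2" "card f = 3" using assms card_tri_edge card_BP_face by auto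
  have fin: "finite f" using c(3) by (intro card_ge_0_finite) simp
  have "\<not> e1 \<subseteq> e0"
  proof
    assume "e1 \<subseteq> e0"
    then have "e1 = e0" using c card_subset_eq by (metis card_ge_0_finite zero_less_numeral)
    then show False using assms(3) by simp
  qed
  then have "e0 \<subset> e0 \<union> e1" by blast
  then have "card e0 < card (e0 \<union> e1)" using fin assms(4) by (meson psubset_card_mono finite_subset)
  moreover have "card (e0 \<union> e1) \<le> 3" using card_mono[OF fin assms(4)] c by simp
  ultimately show ?thesis using card_subset_eq[OF fin assms(4)] c by simp
qed

text \<open>The next edge is the edge of the other face through e1 that avoids the vertex shared
  with e0.\<close>
lemma zz_triple_determined:
  assumes a: "zz_triple e0 e1 e2" "zz_triple e0 e1 e2'" "zz_triple e1 e2 x" "zz_triple e1 e2' y"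
  shows "e2 = e2'"
proof -
  from a(1) obtain f0 where f0: "f0 \<in> BP n" "e0 \<union> e1 \<subseteq> f0" unfolding zz_triple_def by blast
  from a(3) obtain f2 where f2: "f2 \<in> BP n" "e1 \<union> e2 \<subseteq> f2" unfolding zz_triple_def by blast
  from a(4) obtain f3 where f3: "f3 \<in> BP n" "e1 \<union> e2' \<subseteq> f3" unfolding zz_triple_def by blast
  have u0: "e0 \<union> e1 = f0" using Un_edges_eq_face a(1) f0 unfolding zz_triple_def by blast
  have u2: "e1 \<union> e2 = f2" using Un_edges_eq_face a(3) f2 unfolding zz_triple_def by blast
  have u3: "e1 \<union> e2' = f3" using Un_edges_eq_face a(4) f3 unfolding zz_triple_def by blast
  have c1: "card e1 = 2" using a(1) card_tri_edge unfolding zz_triple_def by blast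
  have "f2 = f3"
    by (rule edge_in_two_faces[OF c1 f0(1) f2(1) f3(1)])
      (use a(1,2) u0 u2 u3 in \<open>auto simp: zz_triple_def\<close>)
  have "e0 \<inter> e1 \<noteq> {}"
  proof
    assume dj: "e0 \<inter> e1 = {}"
    have "card e0 = 2" using a(1) card_tri_edge unfolding zz_triple_def by blast
    then have "card (e0 \<union> e1) = 4" using c1 dj card_Un_disjoint
      by (metis add_2_eq_Suc card.infinite nat.distinct(1) numeral_2_eq_2 numeral_Bit0)
    then show False using u0 card_BP_face[OF f0(1)] by simp
  qed
  then obtain w where w: "w \<in> e0" "w \<in> e1" by blast
  have fin: "finite f2" using card_BP_face[OF f2(1)] by (intro card_ge_0_finite) simp
  have cf: "card (f2 - {w}) = 2" using card_BP_face[OF f2(1)] w u2 fin by auto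
  have s2: "e2 \<subseteq> f2 - {w}" "e2' \<subseteq> f2 - {w}"
    using a(1,2) w u2 u3 \<open>f2 = f3\<close> unfolding zz_triple_def by auto
  have "card e2 = 2" "card e2' = 2" using a(3,4) card_tri_edge unfolding zz_triple_def by auto
  then have "e2 = f2 - {w}" "e2' = f2 - {w}" using s2 cf fin by (metis card_subset_eq finite_Diff)+
  then show ?thesis by simp
qed

lemma zz_edge_pair_exists:
  assumes "e0 \<in> tri_edges (BP n)" "e1 \<in> tri_edges (BP n)" "e0 \<noteq> e1" "f \<in> BP n" "e0 \<union> e1 \<subseteq> f"
  shows "\<exists>d s T r. (d = 1 \<or> d = -1) \<and> r < 3 \<and> e0 = zz_edge d s T r \<and> e1 = zz_edge d s T (r + 1)"
proof -
  obtain T j where f: "f = face T j" using assms(4) by (rule BP_faceE)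
  have c: "card e0 = 2" "card e1 = 2" using assms card_tri_edge by auto
  have s: "e0 \<subseteq> face T j" "e1 \<subseteq> face T j" using assms(5) f by auto
  have witness: "\<lbrakk>d = 1 \<or> d = -1; r < 3; e0 = zz_edge d s T r; e1 = zz_edge d s T (r + 1)\<rbrakk> \<Longrightarrow>
    \<exists>d s T r. (d = 1 \<or> d = -1) \<and> r < 3 \<and> e0 = zz_edge d s T r \<and> e1 = zz_edge d s T (r + 1)"
    for d s r by blast
  have h: "zz_edge 1 (j - 1) T 1 = {apex T, vtx j}" "zz_edge 1 (j - 1) T 2 = {apex T, vtx (j + 1)}"
    "zz_edge (-1) (j + 2) T 1 = {apex T, vtx (j + 1)}" "zz_edge (-1) (j + 2) T 2 = {apex T, vtx j}"
    "zz_edge 1 (j - 2) T 2 = {apex T, vtx j}" "zz_edge 1 (j - 2) T 3 = {vtx j, vtx (j + 1)}"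
    "zz_edge (-1) (j + 3) T 2 = {apex T, vtx (j + 1)}" "zz_edge (-1) (j + 3) T 3 = {vtx j, vtx (j + 1)}"
    "zz_edge 1 j T 0 = {vtx j, vtx (j + 1)}" "zz_edge 1 j T 1 = {apex T, vtx (j + 1)}"
    "zz_edge (-1) (j + 1) T 0 = {vtx j, vtx (j + 1)}" "zz_edge (-1) (j + 1) T 1 = {apex T, vtx j}"
    by (simp_all add: zz_edge_first_block zz_edge_first_block_pos zz_edge_first_block_neg insert_commute algebra_simps)
  from edge_of_face_cases[OF c(1) s(1)] edge_of_face_cases[OF c(2) s(2)] assms(3)
  consider "e0 = {apex T, vtx j}" "e1 = {apex T, vtx (j + 1)}"
    | "e0 = {apex T, vtx (j + 1)}" "e1 = {apex T, vtx j}"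
    | "e0 = {apex T, vtx j}" "e1 = {vtx j, vtx (j + 1)}"
    | "e0 = {apex T, vtx (j + 1)}" "e1 = {vtx j, vtx (j + 1)}"
    | "e0 = {vtx j, vtx (j + 1)}" "e1 = {apex T, vtx (j + 1)}"
    | "e0 = {vtx j, vtx (j + 1)}" "e1 = {apex T, vtx j}" by metis
  then show ?thesis
  proof cases
    case 1 then show ?thesis
      using h by (intro witness[of 1 1 "j - 1"]) (simp_all add: numeral_2_eq_2 numeral_3_eq_3)
  next
    case 2 then show ?thesis
      using h by (intro witness[of "-1" 1 "j + 2"]) (simp_all add: numeral_2_eq_2 numeral_3_eq_3)
  next
    case 3 then show ?thesis
      using h by (intro witness[of 1 2 "j - 2"]) (simp_all add: numeral_2_eq_2 numeral_3_eq_3)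
  next
    case 4 then show ?thesis
      using h by (intro witness[of "-1" 2 "j + 3"]) (simp_all add: numeral_2_eq_2 numeral_3_eq_3)
  next
    case 5 then show ?thesis
      using h by (intro witness[of 1 0 j]) (simp_all add: numeral_2_eq_2 numeral_3_eq_3)
  next
    case 6 then show ?thesis
      using h by (intro witness[of "-1" 0 "j + 1"]) (simp_all add: numeral_2_eq_2 numeral_3_eq_3)
  qed
qed

text \<open>Primitivity of both lists forces equal lengths.\<close>
lemma eq_rotate_zz_list_if_nth_eq:
  assumes d: "d = 1 \<or> d = -1" and ne: "es \<noteq> []"
    and prim: "\<forall>c. 0 < c \<and> c < length es \<longrightarrow> rotate c es \<noteq> es"
    and nth_es: "\<And>t. es ! (t mod length es) = zz_edge d s T (r + t)" and r: "r \<le> zz_len"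
  shows "es = rotate r (zz_list d s T)"
proof -
  define L where "L = length es"
  have L_dvd: "L dvd zz_len"
    unfolding L_def
  proof (rule length_dvd_period[OF ne prim])
    fix t show "es ! ((t + zz_len) mod length es) = es ! (t mod length es)"
      using zz_edge_period[of d s T "r + t"] by (simp add: nth_es add.assoc)
  qed
  have zz_edge_period_L: "zz_edge d s T (t + L) = zz_edge d s T t" for t
  proof -
    have "zz_edge d s T (t + L) = zz_edge d s T ((t + L) + zz_len)" by (simp add: zz_edge_period)
    also have "\<dots> = zz_edge d s T (r + ((t + zz_len - r) + L))" using r by (simp add: algebra_simps)
    also have "\<dots> = zz_edge d s T (r + (t + zz_len - r))" unfolding nth_es[symmetric] L_def by simp
    also have "\<dots> = zz_edge d s T t" using r by (simp add: zz_edge_period)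
    finally show ?thesis .
  qed
  have "length (zz_list d s T) dvd L"
  proof (rule length_dvd_period)
    show "zz_list d s T \<noteq> []" using zz_len_pos by (simp add: zz_list_def)
    show "\<forall>c. 0 < c \<and> c < length (zz_list d s T) \<longrightarrow> rotate c (zz_list d s T) \<noteq> zz_list d s T"
      using zz_list_primitive[OF d] by simp
    fix t show "zz_list d s T ! ((t + L) mod length (zz_list d s T))
        = zz_list d s T ! (t mod length (zz_list d s T))"
      by (simp add: nth_mod_zz_list zz_edge_period_L)
  qed
  with L_dvd have L_eq: "L = zz_len" by (simp add: dvd_antisym)
  show ?thesis
  proof (rule nth_equalityI)
    show "length es = length (rotate r (zz_list d s T))" using L_eq unfolding L_def by simp
    fix i assume i: "i < length es"
    have "rotate r (zz_list d s T) ! i = zz_edge d s T (r + i)"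
      using i L_eq unfolding L_def by (simp add: nth_rotate_zz_list)
    also have "\<dots> = es ! i" using nth_es[of i] i by simp
    finally show "es ! i = rotate r (zz_list d s T) ! i" by simp
  qed
qed

text \<open>A zigzag follows the zz_edge sequence through its first two edges by zz_triple_determined.\<close>
lemma is_zz_list_BP_imp_rotation:
  assumes zz: "is_zz_list (BP n) es"
  shows "\<exists>d s T r. (d = 1 \<or> d = -1) \<and> es = rotate r (zz_list d s T)"
proof -
  note Z = zz[unfolded is_zz_list_BP_iff]
  define h where "h t = es ! (t mod length es)" for t
  have h_triple: "zz_triple (h t) (h (t + 1)) (h (t + 2))" for t
  proof -
    have "t mod length es < length es" using Z by simp
    then have "zz_triple (es ! (t mod length es)) (es ! ((t mod length es + 1) mod length es))
        (es ! ((t mod length es + 2) mod length es))"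
      using Z by blast
    then show ?thesis unfolding h_def by (simp add: mod_Suc_eq mod_Suc_Suc_eq)
  qed
  from h_triple[of 0] obtain f where "h 0 \<in> tri_edges (BP n)" "h 1 \<in> tri_edges (BP n)" "h 0 \<noteq> h 1"
    "f \<in> BP n" "h 0 \<union> h 1 \<subseteq> f" unfolding zz_triple_def by auto
  from zz_edge_pair_exists[OF this] obtain d s T r where d: "d = 1 \<or> d = -1" and r: "r < 3"
    and h01: "h 0 = zz_edge d s T r" "h 1 = zz_edge d s T (r + 1)" by blast
  have "h t = zz_edge d s T (r + t) \<and> h (Suc t) = zz_edge d s T (Suc (r + t))" for t
  proof (induction t)
    case 0 then show ?case using h01 by simp
  next
    case (Suc t)
    have "h (Suc (Suc t)) = zz_edge d s T (Suc (Suc (r + t)))"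
      by (rule zz_triple_determined[of "h t" "h (t + 1)" _ _ "h (t + 3)" "zz_edge d s T (r + t + 3)"])
        (use h_triple[of t] h_triple[of "t + 1"] zz_triple_zz_edge[OF d, of s T "r + t"]
          zz_triple_zz_edge[OF d, of s T "r + t + 1"] Suc in \<open>simp_all add: numeral_eq_Suc\<close>)
    then show ?case using Suc by simp
  qed
  then have "es ! (t mod length es) = zz_edge d s T (r + t)" for t unfolding h_def by blast
  moreover have "r \<le> zz_len" using r period_blocks_pos unfolding zz_len_def by simp
  ultimately have "es = rotate r (zz_list d s T)" using Z by (intro eq_rotate_zz_list_if_nth_eq[OF d]) auto
  then show ?thesis using d by blast
qed

lemma rev_zz_list:
  assumes d: "d = 1 \<or> d = -1"
  shows "rev (zz_list d s T) = rotate 1 (zz_list (-d) (s + d) (\<not> T))"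
proof (rule nth_equalityI)
  fix i assume i: "i < length (rev (zz_list d s T))"
  then have iL: "i < zz_len" by simp
  obtain r p where ip: "i = r + 3 * p" and r: "r < 3"
    by (metis mod_less_divisor mod_mult_div_eq mult.commute zero_less_numeral)
  have pm: "p < period_blocks" using iL ip unfolding zz_len_def by simp
  define p' where "p' = period_blocks - 1 - p"
  have j: "zz_len - Suc i = (2 - r) + 3 * p'" using ip r pm unfolding p'_def zz_len_def by simp
  have lhs: "rev (zz_list d s T) ! i = zz_edge d (s + 2 * d * int p') (T = even p') (2 - r)"
    using i j by (simp add: rev_nth nth_zz_list zz_edge_add_blocks)
  have "rotate 1 (zz_list (- d) (s + d) (\<not> T)) ! i = zz_edge (-d) (s + d) (\<not> T) ((r + 1) + 3 * p)"
    using nth_rotate_zz_list[OF iL, of 1 "-d" "s + d" "\<not> T"] ip by (simp add: add.commute)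
  then have rhs: "rotate 1 (zz_list (- d) (s + d) (\<not> T)) ! i
      = zz_edge (-d) (s + d + 2 * (-d) * int p) ((\<not> T) = even p) (r + 1)"
    using zz_edge_add_blocks[of "-d" "s + d" "\<not> T" "r + 1" p] by simp
  have par: "(T = even p') = ((\<not> T) = even p)" using even_period_blocks pm unfolding p'_def by auto
  define X where "X = s + 2 * d * int p'"
  define Y where "Y = s + d + 2 * (-d) * int p"
  have "X - (Y - 3 * d) = (2 * int period_blocks) * d"
    unfolding X_def Y_def p'_def using pm by (simp add: algebra_simps of_nat_diff)
  then have "int n dvd (X - (Y - 3 * d))" using dvd_mult2[OF n_dvd_period_blocks] by metis
  then have vtx_XY: "vtx (X + a) = vtx (Y - 3 * d + a)" for a by (intro vtx_cong) simp
  have edges: "zz_edge d x A 0 = {vtx x, vtx (x + d)}" "zz_edge d x A (Suc 0) = {vtx (x + d), apex A}"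
    "zz_edge d x A (Suc (Suc 0)) = {vtx (x + 2 * d), apex A}"
    "zz_edge d x A (Suc (Suc (Suc 0))) = {vtx (x + 2 * d), vtx (x + 2 * d + d)}" for d x A
    using zz_edge_first_block[of d x A] by (simp_all add: numeral_2_eq_2 numeral_3_eq_3)
  have dd: "d * d = 1" using d by auto
  have "r = 0 \<or> r = 1 \<or> r = 2" using r by auto
  then show "rev (zz_list d s T) ! i = rotate 1 (zz_list (- d) (s + d) (\<not> T)) ! i"
    unfolding lhs rhs par X_def[symmetric] Y_def[symmetric]
  proof (elim disjE)
    assume "r = 0"
    then show "zz_edge d X ((\<not> T) = even p) (2 - r) = zz_edge (- d) Y ((\<not> T) = even p) (r + 1)"
      using vtx_XY[of "2 * d"] by (simp add: edges algebra_simps numeral_2_eq_2)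
  next
    assume "r = 1"
    then show "zz_edge d X ((\<not> T) = even p) (2 - r) = zz_edge (- d) Y ((\<not> T) = even p) (r + 1)"
      using vtx_XY[of d] by (simp add: edges algebra_simps numeral_2_eq_2)
  next
    assume "r = 2"
    then show "zz_edge d X ((\<not> T) = even p) (2 - r) = zz_edge (- d) Y ((\<not> T) = even p) (r + 1)"
      using vtx_XY[of 0] vtx_XY[of d] by (simp add: edges algebra_simps numeral_3_eq_3 insert_commute)
  qed
qed simp

lemma rotate_zz_list_neq_reverse: "zz_list (-1) s T \<noteq> rotate k (zz_list 1 s' T')"
proof
  assume eq: "zz_list (-1) s T = rotate k (zz_list 1 s' T')"
  have z: "zz_edge (-1) s T i = zz_edge 1 s' T' (k + i)" if "i < zz_len" for i
    using eq that by (metis nth_rotate_zz_list nth_zz_list)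
  have z0: "zz_edge 1 s' T' k = {vtx s, vtx (s - 1)}"
    using z[of 0] zz_len_pos by (simp add: zz_edge_first_block)
  then obtain q where k: "k = 3 * q" by (rule zz_edge_base_index)
  define x where "x = s' + 2 * int q"
  have "zz_edge 1 s' T' (k + 1) = {vtx (s - 1), apex T}"
    using z[of 1] zz_len_pos period_blocks_pos by (simp add: zz_edge_first_block zz_len_def)
  then have x1: "vtx (x + 1) = vtx (s - 1)"
    unfolding k zz_edge_block x_def by (auto simp: doubleton_eq_iff)
  from z0 have "(vtx x = vtx s \<and> vtx (x + 1) = vtx (s - 1)) \<or> (vtx x = vtx (s - 1) \<and> vtx (x + 1) = vtx s)"
    unfolding k zz_edge_block x_def by (auto simp: doubleton_eq_iff)
  then show False
  proof
    assume "vtx x = vtx s \<and> vtx (x + 1) = vtx (s - 1)"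
    then have "int n dvd x - s" "int n dvd (x + 1) - (s - 1)" by (simp_all add: vtx_eq_iff)
    then have "int n dvd ((x + 1) - (s - 1)) - (x - s)" by (rule dvd_diff[rotated])
    then show False by simp
  next
    assume "vtx x = vtx (s - 1) \<and> vtx (x + 1) = vtx s"
    with x1 show False by simp
  qed
qed

section \<open>The z-orientation\<close>

definition ZO :: "bp_vertex set list set set" where
  "ZO = {zz_class (zz_list 1 s T) | s T. True}"

lemma zz_class_in_ZO[simp]: "zz_class (zz_list 1 s T) \<in> ZO" unfolding ZO_def by blast

lemma finite_ZO: "finite ZO"
proof -
  have "ZO = (\<lambda>(s, T). zz_class (zz_list 1 s T)) ` ({0..<int n} \<times> UNIV)"
  proof (intro set_eqI iffI)
    fix Z assume "Z \<in> ZO"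
    then obtain s T where Z: "Z = zz_class (zz_list 1 s T)" unfolding ZO_def by blast
    have "zz_list 1 s T = zz_list 1 (s mod int n) T"
      by (rule zz_list_cong) (simp add: mod_eq_dvd_iff[symmetric])
    moreover have "s mod int n \<in> {0..<int n}" using n_pos by simp
    ultimately show "Z \<in> (\<lambda>(s, T). zz_class (zz_list 1 s T)) ` ({0..<int n} \<times> UNIV)" using Z by force
  qed (auto simp: ZO_def)
  then show ?thesis by simp
qed

lemma zigzags_BP_cases:
  assumes "Z \<in> zigzags (BP n)"
  shows "\<exists>d s T. (d = 1 \<or> d = -1) \<and> Z = zz_class (zz_list d s T)"
proof -
  obtain es where Z: "Z = zz_class es" "is_zz_list (BP n) es" using assms unfolding zigzags_def by blast
  from is_zz_list_BP_imp_rotation[OF Z(2)] obtain d s T r where "d = 1 \<or> d = -1" "es = rotate r (zz_list d s T)"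
    by blast
  then show ?thesis using Z(1) zz_class_rotate by metis
qed

lemma zz_rev_notin_ZO: "Z \<in> ZO \<Longrightarrow> zz_rev Z \<notin> ZO"
proof
  assume "Z \<in> ZO" "zz_rev Z \<in> ZO"
  then obtain s T s' T' where Z: "Z = zz_class (zz_list 1 s T)" and Z': "zz_rev Z = zz_class (zz_list 1 s' T')"
    unfolding ZO_def by blast
  have "zz_rev Z = zz_class (zz_list (-1) (s + 1) (\<not> T))"
    unfolding Z zz_rev_zz_class using rev_zz_list[of 1 s T] zz_class_rotate by simp
  then have "zz_list (-1) (s + 1) (\<not> T) \<in> zz_class (zz_list 1 s' T')" using Z' zz_class_self by metis
  then show False unfolding zz_class_def using rotate_zz_list_neq_reverse by blast
qed

lemma z_orientation_ZO: "z_orientation (BP n) ZO"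
  unfolding z_orientation_def
proof (intro conjI ballI impI)
  show "ZO \<subseteq> zigzags (BP n)" unfolding ZO_def zigzags_def using is_zz_list_zz_list by blast
next
  fix Z assume "Z \<in> zigzags (BP n)"
  then obtain d s T where d: "d = 1 \<or> d = -1" and Z: "Z = zz_class (zz_list d s T)"
    using zigzags_BP_cases by blast
  show "Z \<in> ZO \<or> zz_rev Z \<in> ZO"
  proof (cases "d = 1")
    case False
    then have "zz_rev Z = zz_class (zz_list 1 (s - 1) (\<not> T))"
      using d unfolding Z zz_rev_zz_class using rev_zz_list[of "-1" s T] zz_class_rotate by simp
    then show ?thesis by simp
  qed (use Z in simp)
next
  fix Z show "\<not> (Z \<in> ZO \<and> zz_rev Z \<in> ZO)" using zz_rev_notin_ZO by blast
qed

lemma passes_list_rotate_zz_list_pos_iff: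
  "0 < passes_list (rotate k (zz_list d s T)) u v \<longleftrightarrow>
    (\<exists>t. zz_edge d s T t = {u, v} \<and> v \<in> zz_edge d s T (t + 1) \<and> u \<notin> zz_edge d s T (t + 1))"
  (is "_ \<longleftrightarrow> (\<exists>t. ?Q t)")
proof -
  let ?es = "rotate k (zz_list d s T)"
  have next_edge: "?es ! ((i + 1) mod zz_len) = zz_edge d s T (k + i + 1)" for i
  proof -
    have "?es ! ((i + 1) mod zz_len) = zz_edge d s T (k + (i + 1) mod zz_len)"
      using nth_rotate_zz_list zz_len_pos by simp
    also have "\<dots> = zz_edge d s T ((k + (i + 1) mod zz_len) mod zz_len)" by (simp add: zz_edge_mod)
    also have "(k + (i + 1) mod zz_len) mod zz_len = (k + i + 1) mod zz_len"
      by (simp add: mod_add_right_eq add.assoc)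
    finally show ?thesis by (simp add: zz_edge_mod)
  qed
  have "{i. i < length ?es \<and> ?es ! i = {u, v} \<and> v \<in> ?es ! ((i + 1) mod length ?es)
      \<and> u \<notin> ?es ! ((i + 1) mod length ?es)} = {i. i < zz_len \<and> ?Q (k + i)}"
    using nth_rotate_zz_list next_edge by auto
  then have "0 < passes_list ?es u v \<longleftrightarrow> (\<exists>i<zz_len. ?Q (k + i))"
    unfolding passes_list_def by (auto simp: card_gt_0_iff)
  also have "\<dots> \<longleftrightarrow> (\<exists>t. ?Q t)"
  proof (rule ex_window_iff)
    fix t
    have e: "t + zz_len + 1 = (t + 1) + zz_len" by simp
    show "?Q (t + zz_len) = ?Q t" by (simp only: e zz_edge_period)
  qed (rule zz_len_pos)
  finally show ?thesis .
qed

lemma passes_ZO_pos_iff: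
  "0 < passes ZO u v \<longleftrightarrow>
    (\<exists>s T t. zz_edge 1 s T t = {u, v} \<and> v \<in> zz_edge 1 s T (t + 1) \<and> u \<notin> zz_edge 1 s T (t + 1))"
proof -
  have "0 < passes ZO u v \<longleftrightarrow> (\<exists>Z\<in>ZO. 0 < passes_list (zz_rep Z) u v)"
    unfolding passes_def using sum_eq_0_iff[OF finite_ZO, of "\<lambda>Z. passes_list (zz_rep Z) u v"] by auto
  also have "\<dots> \<longleftrightarrow> (\<exists>s T. 0 < passes_list (zz_rep (zz_class (zz_list 1 s T))) u v)"
    unfolding ZO_def by blast
  also have "\<dots> \<longleftrightarrow> (\<exists>s T t. zz_edge 1 s T t = {u, v} \<and> v \<in> zz_edge 1 s T (t + 1) \<and> u \<notin> zz_edge 1 s T (t + 1))"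
    by (metis zz_rep_rotate passes_list_rotate_zz_list_pos_iff)
  finally show ?thesis .
qed

lemma zz_edge_not_backwards:
  assumes "zz_edge 1 s T t = {vtx y, vtx (y + 1)}" "vtx y \<in> zz_edge 1 s T (t + 1)"
  shows False
proof -
  obtain q where t: "t = 3 * q" using assms(1) by (rule zz_edge_base_index)
  define x where "x = s + 2 * int q"
  have "{vtx x, vtx (x + 1)} = {vtx y, vtx (y + 1)}" using assms(1) unfolding t zz_edge_block x_def by simp
  then have "vtx x = vtx y" using vtx_pair_eq_imp_dvd[of 1] by (simp add: vtx_eq_iff)
  moreover have "vtx y \<in> {vtx (x + 1), apex (T = even q)}" using assms(2) unfolding t zz_edge_block x_def by simp
  ultimately show False by auto
qed

lemma typeI_edge_ZO_iff: "typeI_edge (BP n) ZO e \<longleftrightarrow> (\<exists>T y. e = {apex T, vtx y})"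
proof
  assume "typeI_edge (BP n) ZO e"
  then obtain u v where e: "e \<in> tri_edges (BP n)" "e = {u, v}" "0 < passes ZO u v" "0 < passes ZO v u"
    unfolding typeI_edge_def by blast
  show "\<exists>T y. e = {apex T, vtx y}"
  proof (rule ccontr)
    assume "\<not> ?thesis"
    then obtain y where y: "e = bedge y" using e(1) tri_edges_BP_iff by blast
    then have "(u = vtx y \<and> v = vtx (y + 1)) \<or> (u = vtx (y + 1) \<and> v = vtx y)"
      using e(2) unfolding bedge_def by (auto simp: doubleton_eq_iff)
    then have "0 < passes ZO (vtx (y + 1)) (vtx y)" using e(3,4) by auto
    then obtain s T t where "zz_edge 1 s T t = {vtx (y + 1), vtx y}" "vtx y \<in> zz_edge 1 s T (t + 1)"
      unfolding passes_ZO_pos_iff by blast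
    then show False using zz_edge_not_backwards by (metis insert_commute)
  qed
next
  assume "\<exists>T y. e = {apex T, vtx y}"
  then obtain T y where e: "e = {apex T, vtx y}" by blast
  have "zz_edge 1 (y - 2) T 2 = {apex T, vtx y}" "zz_edge 1 (y - 2) T 3 = {vtx y, vtx (y + 1)}"
    by (simp_all add: zz_edge_first_block_pos insert_commute add.commute)
  then have "0 < passes ZO (apex T) (vtx y)" unfolding passes_ZO_pos_iff
    by (intro exI[of _ "y - 2"] exI[of _ T] exI[of _ 2]) simp
  moreover have "zz_edge 1 (y - 1) T 1 = {vtx y, apex T}" "zz_edge 1 (y - 1) T 2 = {vtx (y + 1), apex T}"
    by (simp_all add: zz_edge_first_block zz_edge_first_block_pos add.commute)
  then have "0 < passes ZO (vtx y) (apex T)" unfolding passes_ZO_pos_iff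
    by (intro exI[of _ "y - 1"] exI[of _ T] exI[of _ 1]) (simp del: One_nat_def)
  ultimately have "0 < passes ZO (apex T) (vtx y)" "0 < passes ZO (vtx y) (apex T)" by blast+
  then show "typeI_edge (BP n) ZO e" unfolding typeI_edge_def using e by auto
qed

lemma typeII_edge_ZO_iff: "typeII_edge (BP n) ZO e \<longleftrightarrow> (\<exists>y. e = bedge y)"
  unfolding typeII_edge_def typeI_edge_ZO_iff tri_edges_BP_iff by (metis bedge_ne_apex_edge(1))

lemma base_edge_eq_bedge: "i \<in> {1..n} \<Longrightarrow> base_edge n i = bedge (int i - 1)"
  unfolding base_edge_def bedge_def by (simp add: Base_eq_vtx Base_nxt_eq_vtx)

lemma base_edge_nxt_eq_bedge: "i \<in> {1..n} \<Longrightarrow> base_edge n (nxt n i) = bedge (int i)"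
proof -
  assume i: "i \<in> {1..n}"
  have "nxt n i \<in> {1..n}" unfolding nxt_def using three_le_n by (simp add: Suc_le_eq)
  then have "base_edge n (nxt n i) = bedge (int (nxt n i) - 1)" by (rule base_edge_eq_bedge)
  also have "\<dots> = bedge (int i)"
    unfolding bedge_eq_iff nxt_def by (simp add: zmod_int[symmetric] mod_eq_dvd_iff[symmetric])
  finally show ?thesis .
qed

lemma bedge_eq_base_edge: "\<exists>i\<in>{1..n}. bedge y = base_edge n i"
proof -
  define i where "i = nat (y mod int n) + 1"
  have i: "i \<in> {1..n}" unfolding i_def using nat_mod_n_less by auto
  have "bedge (int i - 1) = bedge y" unfolding bedge_eq_iff i_def using n_pos by (simp add: mod_eq_dvd_iff[symmetric])
  then show ?thesis using i base_edge_eq_bedge by metis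
qed

lemma typeII_edge_ZO_iff_base_edge: "typeII_edge (BP n) ZO e \<longleftrightarrow> (\<exists>i\<in>{1..n}. e = base_edge n i)"
  unfolding typeII_edge_ZO_iff using bedge_eq_base_edge base_edge_eq_bedge by metis

lemma typeI_face_ZO: "f \<in> BP n \<Longrightarrow> typeI_face (BP n) ZO f"
proof -
  assume f: "f \<in> BP n"
  obtain T j where fj: "f = face T j" using f by (rule BP_faceE)
  have "{e \<in> tri_edges (BP n). e \<subseteq> f \<and> typeI_edge (BP n) ZO e} = {{apex T, vtx j}, {apex T, vtx (j + 1)}}"
  proof (intro set_eqI iffI)
    fix e assume "e \<in> {e \<in> tri_edges (BP n). e \<subseteq> f \<and> typeI_edge (BP n) ZO e}"
    then have e: "card e = 2" "e \<subseteq> face T j" "\<exists>T y. e = {apex T, vtx y}"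
      using card_tri_edge fj typeI_edge_ZO_iff by auto
    have "e \<noteq> {vtx j, vtx (j + 1)}" using e(3) bedge_ne_apex_edge(1)[of j] unfolding bedge_def by metis
    with edge_of_face_cases[OF e(1,2)] show "e \<in> {{apex T, vtx j}, {apex T, vtx (j + 1)}}" by blast
  next
    fix e assume "e \<in> {{apex T, vtx j}, {apex T, vtx (j + 1)}}"
    then show "e \<in> {e \<in> tri_edges (BP n). e \<subseteq> f \<and> typeI_edge (BP n) ZO e}"
      unfolding fj typeI_edge_ZO_iff by (auto simp: face_def)
  qed
  moreover have "card {{apex T, vtx j}, {apex T, vtx (j + 1)}} = 2" by (simp add: doubleton_eq_iff)
  ultimately show ?thesis unfolding typeI_face_def using f by simp
qed

lemma homogeneous_ZO: "Z \<in> ZO \<Longrightarrow> homogeneous (BP n) ZO Z"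
proof -
  assume "Z \<in> ZO"
  then obtain s T where Z: "Z = zz_class (zz_list 1 s T)" unfolding ZO_def by blast
  have "typeII_edge (BP n) ZO (zz_edge 1 s T i) \<longleftrightarrow> i mod 3 = 0"
    "i mod 3 \<noteq> 0 \<Longrightarrow> typeI_edge (BP n) ZO (zz_edge 1 s T i)" for i
    unfolding typeII_edge_ZO_iff typeI_edge_ZO_iff zz_edge_def zz_block_def bedge_def
    by (auto simp: doubleton_eq_iff insert_commute)
  then show ?thesis unfolding homogeneous_def
    by (intro bexI[of _ "zz_list 1 s T"]) (auto simp: zz_len_def nth_zz_list Z zz_class_self)
qed

lemma typeII_dir_ZO: "i \<in> {1..n} \<Longrightarrow> typeII_dir (BP n) ZO (Base i) (Base (nxt n i))"
proof -
  assume i: "i \<in> {1..n}"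
  have "typeII_edge (BP n) ZO {Base i, Base (nxt n i)}"
    using i typeII_edge_ZO_iff_base_edge unfolding base_edge_def by blast
  moreover have "zz_edge 1 (int i - 1) True 0 = {vtx (int i - 1), vtx (int i)}"
    "zz_edge 1 (int i - 1) True 1 = {vtx (int i), apex True}"
    by (simp_all add: zz_edge_first_block)
  then have "0 < passes ZO (Base i) (Base (nxt n i))"
    unfolding passes_ZO_pos_iff Base_eq_vtx[OF i] Base_nxt_eq_vtx by fastforce
  ultimately show ?thesis unfolding typeII_dir_def by blast
qed

lemma typeI_vertex_ZO_iff: "typeI_vertex (BP n) ZO x \<longleftrightarrow> x = TopA \<or> x = TopB"
proof
  assume v: "typeI_vertex (BP n) ZO x"
  then have "x \<in> \<Union>(BP n)" unfolding typeI_vertex_def tri_vertices_def by blast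
  then obtain T j where "x \<in> face T j" unfolding BP_eq_faces by blast
  then consider "x = apex T" | "x = vtx j" | "x = vtx (j + 1)" unfolding face_def by blast
  then show "x = TopA \<or> x = TopB"
  proof cases
    case 1 then show ?thesis by (cases T) (auto simp: apex_def)
  next
    case 2
    have "bedge j \<in> tri_edges (BP n)" "x \<in> bedge j" using 2 tri_edges_BP_iff by (auto simp: bedge_def)
    then have "typeI_edge (BP n) ZO (bedge j)" using v unfolding typeI_vertex_def by blast
    then show ?thesis unfolding typeI_edge_ZO_iff by (metis bedge_ne_apex_edge(1))
  next
    case 3
    have "bedge j \<in> tri_edges (BP n)" "x \<in> bedge j" using 3 tri_edges_BP_iff by (auto simp: bedge_def)
    then have "typeI_edge (BP n) ZO (bedge j)" using v unfolding typeI_vertex_def by blast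
    then show ?thesis unfolding typeI_edge_ZO_iff by (metis bedge_ne_apex_edge(1))
  qed
next
  assume "x = TopA \<or> x = TopB"
  then obtain T where x: "x = apex T" unfolding apex_def by (metis (full_types))
  have "x \<in> tri_vertices (BP n)" unfolding tri_vertices_def x using face_in_BP[of T 0] by (auto simp: face_def)
  moreover have "typeI_edge (BP n) ZO e" if "e \<in> tri_edges (BP n)" "x \<in> e" for e
    using that x unfolding tri_edges_BP_iff typeI_edge_ZO_iff bedge_def by auto
  ultimately show "typeI_vertex (BP n) ZO x" unfolding typeI_vertex_def by blast
qed

lemma zz_edge_base_step: "zz_edge 1 s T (3 * q) = bedge (s + 2 * int q)"
  unfolding bedge_def zz_edge_block by simp

lemma zz_class_zz_list_eq_imp:
  assumes "zz_class (zz_list 1 s T) = zz_class (zz_list 1 s' T')"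
  shows "\<exists>q. int n dvd (s - s' - 2 * int q) \<and> T = (T' = even q)"
proof -
  have "zz_list 1 s T \<in> zz_class (zz_list 1 s' T')" using assms zz_class_self by metis
  then obtain k where "zz_list 1 s T = rotate k (zz_list 1 s' T')" unfolding zz_class_def by blast
  then show ?thesis using rotate_zz_list_eq[of 1] by (metis mult.right_neutral)
qed

lemma bedge_adjacent:
  assumes "bedge x \<inter> bedge y \<noteq> {}" "bedge x \<noteq> bedge y"
  obtains sg where "sg = 1 \<or> sg = -1" "bedge y = bedge (x + sg)"
proof -
  from assms(1) have "vtx x = vtx y \<or> vtx x = vtx (y + 1) \<or> vtx (x + 1) = vtx y \<or> vtx (x + 1) = vtx (y + 1)"
    unfolding bedge_def by auto
  then show thesis
  proof (elim disjE)
    assume "vtx x = vtx (y + 1)"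
    then have "bedge y = bedge (x + -1)" by (simp add: bedge_eq_iff vtx_eq_iff dvd_diff_commute algebra_simps)
    then show thesis using that by blast
  next
    assume "vtx (x + 1) = vtx y"
    then have "bedge y = bedge (x + 1)" by (simp add: bedge_eq_iff vtx_eq_iff dvd_diff_commute)
    then show thesis using that by blast
  qed (use assms(2) in \<open>simp_all add: bedge_eq_iff vtx_eq_iff\<close>)
qed

section \<open>Odd n: a single zigzag\<close>

lemma odd_two_mul_half: "odd n \<Longrightarrow> 2 * int ((n + 1) div 2) = int n + 1"
  by (auto elim: oddE)

lemma zz_len_odd: "odd n \<Longrightarrow> zz_len = 6 * n" unfolding zz_len_def period_blocks_def by simp

lemma nth_zz_list_base_odd: "odd n \<Longrightarrow> q < 2 * n \<Longrightarrow> zz_list 1 x T ! (3 * q) = bedge (x + 2 * int q)"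
  using zz_len_odd by (simp add: nth_zz_list zz_edge_base_step)

text \<open>For odd n, 2 is invertible modulo n, with inverse (n + 1) / 2.\<close>
lemma exists_half_mod:
  assumes o: "odd n"
  obtains a where "a < n" "int n dvd (2 * int a - w)"
proof -
  define h where "h = int ((n + 1) div 2)"
  define a where "a = nat ((w * h) mod int n)"
  have ia: "int a = (w * h) mod int n" unfolding a_def using n_pos by simp
  have "a < n" unfolding a_def using n_pos by (simp add: nat_less_iff)
  moreover have "2 * int a - w = int n * (w - 2 * ((w * h) div int n))"
    unfolding ia minus_div_mult_eq_mod[symmetric] h_def using odd_two_mul_half[OF o] by (simp add: algebra_simps)
  ultimately show thesis using that by simp
qed

lemma zz_class_zz_list_odd:
  assumes o: "odd n"
  shows "zz_class (zz_list 1 s T) = zz_class (zz_list 1 0 True)"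
proof -
  obtain a where a: "a < n" "int n dvd (2 * int a - s)" using exists_half_mod[OF o] .
  define c where "c = (if even a = T then a else a + n)"
  have "T = (True = even c)" unfolding c_def using o by auto
  moreover have "int n dvd (0 + 2 * 1 * int c - s)"
  proof (cases "even a = T")
    case False
    have "int n dvd (2 * int a - s) + int n * 2" by (rule dvd_add[OF a(2)]) simp
    then show ?thesis using False unfolding c_def by (simp add: algebra_simps)
  qed (use a c_def in simp)
  ultimately show ?thesis by (intro zz_class_zz_list_shift)
qed

lemma ZO_odd: "odd n \<Longrightarrow> ZO = {zz_class (zz_list 1 0 True)}"
  unfolding ZO_def using zz_class_zz_list_odd by auto

lemma special_pair_odd:
  assumes o: "odd n" and i: "i \<in> {1..n}"
  shows "special_pair (BP n) ZO (base_edge n i) (base_edge n (nxt n i))"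
proof -
  define x where "x = int i - 1"
  define h where "h = (n + 1) div 2"
  have c1: "base_edge n i = bedge x" unfolding x_def by (rule base_edge_eq_bedge[OF i])
  have c2: "base_edge n (nxt n i) = bedge (x + 1)" unfolding x_def using base_edge_nxt_eq_bedge[OF i] by simp
  have es: "zz_list 1 x True \<in> zz_class (zz_list 1 0 True)"
    using zz_class_zz_list_odd[OF o, of x True] zz_class_self by metis
  have h2: "2 * int h = int n + 1" unfolding h_def by (rule odd_two_mul_half[OF o])
  have hn: "0 < h" "h < n" using h2 three_le_n by linarith+
  have "zz_list 1 x True ! (3 * 0) = bedge x"
    using nth_zz_list_base_odd[OF o, of 0] n_pos by simp
  moreover have "zz_list 1 x True ! (3 * h) = bedge (x + 1)"
    using nth_zz_list_base_odd[OF o, of h] hn h2 by (simp add: bedge_eq_iff)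
  moreover have "zz_list 1 x True ! (3 * n) = bedge x"
    using nth_zz_list_base_odd[OF o, of n] n_pos by (simp add: bedge_eq_iff)
  moreover have "zz_list 1 x True ! (3 * (h + n)) = bedge (x + 1)"
    using nth_zz_list_base_odd[OF o, of "h + n"] hn h2 by (simp add: bedge_eq_iff algebra_simps)
  ultimately have pos: "\<exists>i1 i2 i3 i4. i1 < i2 \<and> i2 < i3 \<and> i3 < i4 \<and> i4 < length (zz_list 1 x True) \<and>
      zz_list 1 x True ! i1 = bedge x \<and> zz_list 1 x True ! i2 = bedge (x + 1) \<and>
      zz_list 1 x True ! i3 = bedge x \<and> zz_list 1 x True ! i4 = bedge (x + 1)"
    using hn zz_len_odd[OF o]
    by (intro exI[of _ "3 * 0"] exI[of _ "3 * h"] exI[of _ "3 * n"] exI[of _ "3 * (h + n)"]) simp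
  have "\<exists>Z. ZO = {Z} \<and> (\<exists>es\<in>Z. \<exists>i1 i2 i3 i4. i1 < i2 \<and> i2 < i3 \<and> i3 < i4 \<and> i4 < length es \<and>
      es ! i1 = bedge x \<and> es ! i2 = bedge (x + 1) \<and> es ! i3 = bedge x \<and> es ! i4 = bedge (x + 1))"
    by (intro exI[of _ "zz_class (zz_list 1 0 True)"] conjI ZO_odd[OF o] bexI[of _ "zz_list 1 x True"] pos es)
  moreover have "bedge x \<noteq> bedge (x + 1)" by (simp add: bedge_eq_iff)
  moreover have "bedge x \<inter> bedge (x + 1) \<noteq> {}" by (auto simp: bedge_def)
  ultimately show ?thesis unfolding special_pair_def c1 c2 typeII_edge_ZO_iff by (intro conjI) blast+
qed

lemma concordant_odd_core:
  assumes o: "odd n" and order: "0 < a" "a < p" "p < a'" "a' < n"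
    and C1: "C1 = bedge x" and T1: "T1 = bedge (x + 2 * int a)"
    and C2: "C2 = bedge (x + 2 * int p)" and T2: "T2 = bedge (x + 2 * int a')"
    and ne: "C1 \<noteq> T1" "C1 \<noteq> T2" "C2 \<noteq> T1" "C2 \<noteq> T2"
  shows "concordant ZO C1 C2 T1 T2"
proof -
  have es: "zz_list 1 x True \<in> zz_class (zz_list 1 0 True)"
    using zz_class_zz_list_odd[OF o, of x True] zz_class_self by metis
  define js where "js = [3 * 0, 3 * a, 3 * p, 3 * a', 3 * n, 3 * (n + a), 3 * (n + p), 3 * (n + a')]"
  have "strict_mono_on {0..7} (\<lambda>k. js ! k)"
    by (rule sorted_nth_strict_mono_on) (use order in \<open>simp_all add: js_def\<close>)
  moreover have "js ! 7 < length (zz_list 1 x True)" unfolding js_def using order zz_len_odd[OF o] by simp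
  moreover have v: "zz_list 1 x True ! (3 * q) = bedge (x + 2 * int q)" if "q < 2 * n" for q
    using nth_zz_list_base_odd[OF o that] .
  have "zz_list 1 x True ! (js ! 0) = C1" "zz_list 1 x True ! (js ! 1) = T1"
    "zz_list 1 x True ! (js ! 2) = C2" "zz_list 1 x True ! (js ! 3) = T2"
    "zz_list 1 x True ! (js ! 4) = C1" "zz_list 1 x True ! (js ! 5) = T1"
    "zz_list 1 x True ! (js ! 6) = C2" "zz_list 1 x True ! (js ! 7) = T2"
    unfolding js_def using v[of 0] v[of a] v[of p] v[of a'] v[of n] v[of "n + a"] v[of "n + p"]
      v[of "n + a'"] order n_pos
    by (simp_all add: C1 T1 C2 T2 bedge_eq_iff)
  ultimately show ?thesis unfolding concordant_def ZO_odd[OF o] using ne es by blast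
qed

lemma special_pair_ZO_bedges:
  assumes "special_pair (BP n) ZO c1 c2"
  shows "\<exists>x sg. (sg = 1 \<or> sg = -1) \<and> c2 = bedge (x + sg) \<and> c1 = bedge x"
proof -
  from assms obtain x y where "c1 = bedge x" "c2 = bedge y" "c1 \<noteq> c2" "c1 \<inter> c2 \<noteq> {}"
    unfolding special_pair_def typeII_edge_ZO_iff by blast
  then show ?thesis using bedge_adjacent by metis
qed

text \<open>Along the zigzag, bedge (x + 2a) is reached after a blocks; two base edges sharing a
  vertex are half a turn apart, so two disjoint special pairs interleave.\<close>
lemma concordant_odd:
  assumes o: "odd n" and sp: "special_pair (BP n) ZO c1 c2" "special_pair (BP n) ZO t1 t2"
    and dj: "{c1, c2} \<inter> {t1, t2} = {}"
  shows "concordant ZO c1 c2 t1 t2 \<or> concordant ZO c1 c2 t2 t1"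
proof -
  obtain x sc where sc: "sc = 1 \<or> sc = -1" "c2 = bedge (x + sc)" and c1: "c1 = bedge x"
    using special_pair_ZO_bedges[OF sp(1)] by blast
  obtain z st where st: "st = 1 \<or> st = -1" "t2 = bedge (z + st)" and t1: "t1 = bedge z"
    using special_pair_ZO_bedges[OF sp(2)] by blast
  define h where "h = (n + 1) div 2"
  have h2: "2 * int h = int n + 1" unfolding h_def by (rule odd_two_mul_half[OF o])
  define P where "P = (if sc = 1 then h else h - 1)"
  have iP: "int P = (if sc = 1 then int h else int h - 1)" unfolding P_def using h2 by auto
  have P: "bedge (x + 2 * int P) = c2" unfolding sc(2) bedge_eq_iff using sc(1) h2 iP by (auto simp: algebra_simps)
  obtain A1 where A1: "A1 < n" "int n dvd (2 * int A1 - (z - x))" using exists_half_mod[OF o] .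
  obtain A2 where A2: "A2 < n" "int n dvd (2 * int A2 - (z + st - x))" using exists_half_mod[OF o] .
  have T1: "bedge (x + 2 * int A1) = t1" unfolding t1 bedge_eq_iff using A1(2) by (simp add: algebra_simps)
  have T2: "bedge (x + 2 * int A2) = t2" unfolding st(2) bedge_eq_iff using A2(2) by (simp add: algebra_simps)
  have dne: "c1 \<noteq> t1" "c1 \<noteq> t2" "c2 \<noteq> t1" "c2 \<noteq> t2" using dj by auto
  have "int n dvd 2 * (int A2 - int A1 - st * int h)"
  proof -
    have e: "2 * (int A2 - int A1 - st * int h)
        = (2 * int A2 - (z + st - x)) - (2 * int A1 - (z - x)) + int n * (- st)"
      using h2 by (simp add: algebra_simps)
    show ?thesis unfolding e by (intro dvd_add dvd_diff A1(2) A2(2)) simp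
  qed
  moreover have "coprime (int n) 2" using o by simp
  ultimately have "int n dvd (int A2 - int A1 - st * int h)" using coprime_dvd_mult_right_iff by blast
  then obtain c where c: "int A2 - int A1 - st * int h = int n * c" by (auto elim: dvdE)
  have "(0 < int A1 \<and> int A1 < int P \<and> int P < int A2) \<or> (0 < int A2 \<and> int A2 < int P \<and> int P < int A1)"
  proof (rule interleaving_of_half_shift[of "int n" "int h" "int P" st "int A1" "int A2" c])
    show "2 \<le> int h" using h2 three_le_n by linarith
  qed (use h2 iP st(1) A1 A2 c dne T1 T2 P c1 in auto)
  then show ?thesis
  proof
    assume "0 < int A1 \<and> int A1 < int P \<and> int P < int A2"
    then have "concordant ZO c1 c2 t1 t2"
      using concordant_odd_core[OF o _ _ _ A2(1) c1 T1[symmetric] P[symmetric] T2[symmetric] dne] by simp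
    then show ?thesis ..
  next
    assume "0 < int A2 \<and> int A2 < int P \<and> int P < int A1"
    then have "concordant ZO c1 c2 t2 t1"
      using concordant_odd_core[OF o _ _ _ A1(1) c1 T2[symmetric] P[symmetric] T1[symmetric]] dne by auto
    then show ?thesis ..
  qed
qed

section \<open>Even n\<close>

lemma zz_occ_zz_class_zz_list: "zz_occ (zz_class (zz_list 1 s T)) e = card {i. i < zz_len \<and> zz_edge 1 s T i = e}"
proof -
  obtain k where k: "zz_rep (zz_class (zz_list 1 s T)) = rotate k (zz_list 1 s T)" using zz_rep_rotate by blast
  have "zz_occ (zz_class (zz_list 1 s T)) e = length (filter (\<lambda>y. y = e) (rotate k (zz_list 1 s T)))"
    unfolding zz_occ_def k by (simp add: length_filter_conv_card)
  also have "\<dots> = length (filter (\<lambda>y. y = e) (zz_list 1 s T))" by (rule length_filter_rotate)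
  also have "\<dots> = card {i. i < zz_len \<and> zz_edge 1 s T i = e}"
    by (simp add: length_filter_conv_card nth_zz_list cong: conj_cong)
  finally show ?thesis .
qed

lemma zz_edge_positions_bedge_even:
  assumes nk: "n = 2 * k"
  shows "{i. i < zz_len \<and> zz_edge 1 s T i = bedge s} = (\<lambda>q. 3 * q) ` {q. q < period_blocks \<and> k dvd q}"
proof (intro set_eqI iffI)
  fix i assume "i \<in> {i. i < zz_len \<and> zz_edge 1 s T i = bedge s}"
  then have i: "i < zz_len" "zz_edge 1 s T i = bedge s" by auto
  then obtain q where iq: "i = 3 * q" unfolding bedge_def by (elim zz_edge_base_index)
  have "bedge (s + 2 * int q) = bedge s" using i(2) iq zz_edge_base_step by simp
  then have "int n dvd 2 * int q" by (simp add: bedge_eq_iff)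
  then have "k dvd q" using nk by simp
  moreover have "q < period_blocks" using i(1) iq unfolding zz_len_def by simp
  ultimately show "i \<in> (\<lambda>q. 3 * q) ` {q. q < period_blocks \<and> k dvd q}" using iq by blast
next
  fix i assume "i \<in> (\<lambda>q. 3 * q) ` {q. q < period_blocks \<and> k dvd q}"
  then obtain q where q: "i = 3 * q" "q < period_blocks" "k dvd q" by blast
  then have "int n dvd 2 * int q" using nk by simp
  then have "bedge (s + 2 * int q) = bedge s" by (simp add: bedge_eq_iff)
  then show "i \<in> {i. i < zz_len \<and> zz_edge 1 s T i = bedge s}"
    using q zz_edge_base_step unfolding zz_len_def by simp
qed

lemma multiples_below_period_blocks_even:
  assumes nk: "n = 2 * k"
  shows "{q. q < period_blocks \<and> k dvd q} = (if odd k then {0, k} else {0})"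
proof -
  have k: "0 < k" using nk three_le_n by simp
  have multiples: "{q. q < m * k \<and> k dvd q} = (\<lambda>c. k * c) ` {..<m}" for m
    using k by (auto elim!: dvdE simp: image_iff)
  show ?thesis
  proof (cases "odd k")
    case True
    then have "period_blocks = 2 * k" using nk unfolding period_blocks_def by simp
    then show ?thesis using multiples[of 2] True by (simp add: lessThan_Suc numeral_2_eq_2 insert_commute)
  next
    case False
    then have "period_blocks = 1 * k" using nk unfolding period_blocks_def by simp
    then show ?thesis using multiples[of 1] False by (simp add: lessThan_Suc)
  qed
qed

lemma zz_occ_bedge_even:
  assumes nk: "n = 2 * k"
  shows "zz_occ (zz_class (zz_list 1 s T)) (bedge s) = (if odd k then 2 else 1)"
proof -
  have "0 < k" using nk three_le_n by simp
  then show ?thesis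
    by (simp add: zz_occ_zz_class_zz_list zz_edge_positions_bedge_even[OF nk]
        multiples_below_period_blocks_even[OF nk] card_image inj_on_def)
qed

text \<open>For even n, a zigzag visits only base edges bedge (s + 2q), so it never meets the base
  edges of the other parity.\<close>
lemma zz_class_zz_list_neq_parity:
  assumes nk: "n = 2 * k" and od: "odd (s - s')"
  shows "zz_class (zz_list 1 s T) \<noteq> zz_class (zz_list 1 s' T')"
proof
  assume "zz_class (zz_list 1 s T) = zz_class (zz_list 1 s' T')"
  then obtain q where "int n dvd (s - s' - 2 * int q)" using zz_class_zz_list_eq_imp by blast
  then obtain c where "s - s' - 2 * int q = int n * c" by (auto elim: dvdE)
  then have "s - s' - 2 * int q = 2 * (int k * c)" using nk by simp
  then have "even (s - s' - 2 * int q)" by (metis dvd_triv_left)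
  then show False using od by simp
qed

lemma zz_class_zz_list_neq_apex:
  assumes nk: "n = 2 * k" and ek: "even k" and TT: "T \<noteq> T'"
  shows "zz_class (zz_list 1 s T) \<noteq> zz_class (zz_list 1 s T')"
proof
  assume "zz_class (zz_list 1 s T) = zz_class (zz_list 1 s T')"
  then obtain q where q: "int n dvd (s - s - 2 * int q)" "T = (T' = even q)"
    using zz_class_zz_list_eq_imp by blast
  then have "k dvd q" using nk by simp
  then have "even q" using ek by (metis dvd_trans)
  then show False using q(2) TT by simp
qed

lemma exists_shift_even:
  assumes nk: "n = 2 * k"
  obtains c where "int n dvd (s mod 2 + 2 * int c - s)"
proof -
  define w where "w = (s - s mod 2) div 2"
  have sw: "s - s mod 2 = 2 * w" unfolding w_def by (simp add: minus_mod_eq_mult_div)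
  define c where "c = nat (w mod int k)"
  have k: "0 < k" using nk three_le_n by simp
  have ic: "int c = w - w div int k * int k" unfolding c_def using k by (simp add: minus_div_mult_eq_mod)
  have "s mod 2 + 2 * int c - s = int n * (- (w div int k))" unfolding ic using sw nk by (simp add: algebra_simps)
  then show thesis using that by (metis dvd_triv_left)
qed

lemma ZO_eq_odd_half:
  assumes nk: "n = 2 * k" and ok: "odd k"
  shows "ZO = {zz_class (zz_list 1 0 True), zz_class (zz_list 1 1 True)}"
proof (intro set_eqI iffI)
  fix Z assume "Z \<in> ZO"
  then obtain s T where Z: "Z = zz_class (zz_list 1 s T)" unfolding ZO_def by blast
  obtain c where c: "int n dvd (s mod 2 + 2 * int c - s)" using exists_shift_even[OF nk] .
  define c' where "c' = (if even c = T then c else c + k)"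
  have "T = (True = even c')" unfolding c'_def using ok by auto
  moreover have "int n dvd (s mod 2 + 2 * 1 * int c' - s)"
  proof (cases "even c = T")
    case False
    have "int n dvd (s mod 2 + 2 * int c - s) + int n" by (rule dvd_add[OF c]) simp
    then show ?thesis using False nk unfolding c'_def by (simp add: algebra_simps)
  qed (use c c'_def in simp)
  ultimately have "Z = zz_class (zz_list 1 (s mod 2) True)" unfolding Z by (intro zz_class_zz_list_shift)
  moreover have "s mod 2 = 0 \<or> s mod 2 = 1" by auto
  ultimately show "Z \<in> {zz_class (zz_list 1 0 True), zz_class (zz_list 1 1 True)}" by auto
qed auto

lemma ZO_eq_even:
  assumes nk: "n = 2 * k"
  shows "ZO = {zz_class (zz_list 1 0 True), zz_class (zz_list 1 0 False),
    zz_class (zz_list 1 1 True), zz_class (zz_list 1 1 False)}"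
proof (intro set_eqI iffI)
  fix Z assume "Z \<in> ZO"
  then obtain s T where Z: "Z = zz_class (zz_list 1 s T)" unfolding ZO_def by blast
  obtain c where c: "int n dvd (s mod 2 + 2 * int c - s)" using exists_shift_even[OF nk] .
  have "Z = zz_class (zz_list 1 (s mod 2) (T = even c))" unfolding Z
    by (rule zz_class_zz_list_shift) (use c in auto)
  moreover have "s mod 2 = 0 \<or> s mod 2 = 1" by auto
  ultimately show "Z \<in> {zz_class (zz_list 1 0 True), zz_class (zz_list 1 0 False),
      zz_class (zz_list 1 1 True), zz_class (zz_list 1 1 False)}" by (cases "T = even c") auto
qed auto

lemma ZO_card_zz_occ_odd_half:
  assumes nk: "n = 2 * k" and ok: "odd k"
  shows "card ZO = 2 \<and> (\<forall>i\<in>{1..n}. \<exists>Z1\<in>ZO. \<exists>Z2\<in>ZO. Z1 \<noteq> Z2 \<and>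
          zz_occ Z1 (base_edge n i) = 2 \<and> zz_occ Z2 (base_edge n (nxt n i)) = 2)"
proof (intro conjI ballI)
  show "card ZO = 2"
    using zz_class_zz_list_neq_parity[OF nk, of 0 1] by (simp add: ZO_eq_odd_half[OF nk ok])
next
  fix i assume i: "i \<in> {1..n}"
  define x where "x = int i - 1"
  have "base_edge n i = bedge x" "base_edge n (nxt n i) = bedge (x + 1)"
    unfolding x_def using base_edge_eq_bedge[OF i] base_edge_nxt_eq_bedge[OF i] by simp_all
  moreover have "zz_class (zz_list 1 x True) \<noteq> zz_class (zz_list 1 (x + 1) True)"
    by (rule zz_class_zz_list_neq_parity[OF nk]) simp
  ultimately show "\<exists>Z1\<in>ZO. \<exists>Z2\<in>ZO. Z1 \<noteq> Z2 \<and>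
      zz_occ Z1 (base_edge n i) = 2 \<and> zz_occ Z2 (base_edge n (nxt n i)) = 2"
    using zz_occ_bedge_even[OF nk, of x True] zz_occ_bedge_even[OF nk, of "x + 1" True] ok by fastforce
qed

lemma ZO_card_zz_occ_even_half:
  assumes nk: "n = 2 * k" and ek: "even k"
  shows "card ZO = 4 \<and> (\<forall>i\<in>{1..n}. \<exists>Z1\<in>ZO. \<exists>Z2\<in>ZO. \<exists>Z3\<in>ZO. \<exists>Z4\<in>ZO. distinct [Z1, Z2, Z3, Z4] \<and>
          zz_occ Z1 (base_edge n i) = 1 \<and> zz_occ Z2 (base_edge n i) = 1 \<and>
          zz_occ Z3 (base_edge n (nxt n i)) = 1 \<and> zz_occ Z4 (base_edge n (nxt n i)) = 1)"
proof (intro conjI ballI)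
  have distinct: "distinct [zz_class (zz_list 1 x True), zz_class (zz_list 1 x False),
      zz_class (zz_list 1 (x + 1) True), zz_class (zz_list 1 (x + 1) False)]" for x
    using zz_class_zz_list_neq_parity[OF nk, of x "x + 1"] zz_class_zz_list_neq_parity[OF nk, of "x + 1" x]
      zz_class_zz_list_neq_apex[OF nk ek, of True False] by auto
  show "card ZO = 4" using distinct[of 0] by (simp add: ZO_eq_even[OF nk])
  fix i assume i: "i \<in> {1..n}"
  define x where "x = int i - 1"
  have "base_edge n i = bedge x" "base_edge n (nxt n i) = bedge (x + 1)"
    unfolding x_def using base_edge_eq_bedge[OF i] base_edge_nxt_eq_bedge[OF i] by simp_all
  then show "\<exists>Z1\<in>ZO. \<exists>Z2\<in>ZO. \<exists>Z3\<in>ZO. \<exists>Z4\<in>ZO. distinct [Z1, Z2, Z3, Z4] \<and>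
      zz_occ Z1 (base_edge n i) = 1 \<and> zz_occ Z2 (base_edge n i) = 1 \<and>
      zz_occ Z3 (base_edge n (nxt n i)) = 1 \<and> zz_occ Z4 (base_edge n (nxt n i)) = 1"
    using distinct[of x] zz_occ_bedge_even[OF nk] ek
    by (intro bexI[OF _ zz_class_in_ZO[of x True]] bexI[OF _ zz_class_in_ZO[of x False]]
        bexI[OF _ zz_class_in_ZO[of "x + 1" True]] bexI[OF _ zz_class_in_ZO[of "x + 1" False]]) simp
qed

end

theorem mainTheorem10:
  fixes n :: nat
  assumes "n \<ge> 3"
  shows "\<exists>ZO. z_orientation (BP n) ZO \<and>
    (\<forall>f\<in>BP n. typeI_face (BP n) ZO f) \<and>
    (\<forall>Z\<in>ZO. homogeneous (BP n) ZO Z) \<and>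
    (\<forall>e. typeII_edge (BP n) ZO e \<longleftrightarrow> (\<exists>i\<in>{1..n}. e = base_edge n i)) \<and>
    ((\<forall>i\<in>{1..n}. typeII_dir (BP n) ZO (Base i) (Base (nxt n i))) \<or>
     (\<forall>i\<in>{1..n}. typeII_dir (BP n) ZO (Base (nxt n i)) (Base i))) \<and>
    (\<forall>x. typeI_vertex (BP n) ZO x \<longleftrightarrow> x = TopA \<or> x = TopB) \<and>
    (odd n \<longrightarrow>
       (\<exists>Z. ZO = {Z}) \<and>
       (\<forall>i\<in>{1..n}. special_pair (BP n) ZO (base_edge n i) (base_edge n (nxt n i))) \<and>
       (\<forall>c1 c2 t1 t2. special_pair (BP n) ZO c1 c2 \<and> special_pair (BP n) ZO t1 t2 \<and>
          {c1, c2} \<inter> {t1, t2} = {} \<longrightarrow>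
          concordant ZO c1 c2 t1 t2 \<or> concordant ZO c1 c2 t2 t1)) \<and>
    (\<forall>k. n = 2 * k \<and> odd k \<longrightarrow>
       card ZO = 2 \<and>
       (\<forall>i\<in>{1..n}. \<exists>Z1\<in>ZO. \<exists>Z2\<in>ZO. Z1 \<noteq> Z2 \<and>
          zz_occ Z1 (base_edge n i) = 2 \<and> zz_occ Z2 (base_edge n (nxt n i)) = 2)) \<and>
    (\<forall>k. n = 2 * k \<and> even k \<longrightarrow>
       card ZO = 4 \<and>
       (\<forall>i\<in>{1..n}. \<exists>Z1\<in>ZO. \<exists>Z2\<in>ZO. \<exists>Z3\<in>ZO. \<exists>Z4\<in>ZO. distinct [Z1, Z2, Z3, Z4] \<and>
          zz_occ Z1 (base_edge n i) = 1 \<and> zz_occ Z2 (base_edge n i) = 1 \<and>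
          zz_occ Z3 (base_edge n (nxt n i)) = 1 \<and> zz_occ Z4 (base_edge n (nxt n i)) = 1))"
proof -
  interpret bipyramid n using assms by unfold_locales
  have odd_case: "odd n \<longrightarrow> (\<exists>Z. ZO = {Z}) \<and>
      (\<forall>i\<in>{1..n}. special_pair (BP n) ZO (base_edge n i) (base_edge n (nxt n i))) \<and>
      (\<forall>c1 c2 t1 t2. special_pair (BP n) ZO c1 c2 \<and> special_pair (BP n) ZO t1 t2 \<and>
         {c1, c2} \<inter> {t1, t2} = {} \<longrightarrow> concordant ZO c1 c2 t1 t2 \<or> concordant ZO c1 c2 t2 t1)"
    using ZO_odd special_pair_odd concordant_odd by simp
  show ?thesis
    using z_orientation_ZO typeI_face_ZO homogeneous_ZO typeII_edge_ZO_iff_base_edge typeII_dir_ZO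
      typeI_vertex_ZO_iff odd_case ZO_card_zz_occ_odd_half ZO_card_zz_occ_even_half
    by (intro exI[of _ ZO] conjI) simp_all
qed

end
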